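(* Assume (C1) and (C2), let $\epsilon>0$, and let $L$ be the operator on $\mathscr{C}$ given by $L=\sum_{k\in\mathbb{Z}_K}\sum_{j\in\mathbb{Z}_M}\big\{\frac12(\partial_{k,j+1}-\partial_{k,j})^2-\frac12(u_{k,j+1}-u_{k,j})(\partial_{k,j+1}-\partial_{k,j})+\epsilon B_{k,j}(u)\partial_{k,j}\big\}$ (the generator of the coupled Sasamoto–Spohn dynamics). Then for all $f,g\in\mathscr{C}$, $\int (Lf)\,g\,d\mu_{K,M}=\int f\,(L^*g)\,d\mu_{K,M}$, where $L^*=\sum_{k\in\mathbb{Z}_K}\sum_{j\in\mathbb{Z}_M}\big\{\frac12(\partial_{k,j+1}-\partial_{k,j})^2-\frac12(u_{k,j+1}-u_{k,j})(\partial_{k,j+1}-\partial_{k,j})-\epsilon B_{k,j}(u)\partial_{k,j}\big\}$.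
   Context: Fix integers $K,M\ge1$; $\mathbb{Z}_m=\mathbb{Z}/m\mathbb{Z}$, $\mathbb{Z}_m^*=\mathbb{Z}_m\setminus\{0\}$; component indices modulo $K$, site indices modulo $M$. Real coefficients $\alpha_k$, $\beta_k^l,\gamma_k^l$ ($l\in\mathbb{Z}_K^*$), $\lambda_k^{k-l,k-l'}$ ($l,l'\in\mathbb{Z}_K^*$, $l\ne l'$) are given. For $u\in\mathbb{R}^{\mathbb{Z}_K\times\mathbb{Z}_M}$: $w_{k,j}=\frac13(u_{k,j}^2+u_{k,j}u_{k,j+1}+u_{k,j+1}^2)$, $b_{k,j}^l=\frac12(u_{k,j}u_{k+l,j}+u_{k,j+1}u_{k+l,j+1})$, $r_{k,j}^l=u_{k-l,j}u_{k-l,j+1}$, $p_{k,j}^{l,l'}=\frac16(2u_{k-l,j}u_{k-l',j}+u_{k-l,j}u_{k-l',j+1}+u_{k-l,j+1}u_{k-l',j}+2u_{k-l,j+1}u_{k-l',j+1})$, $G_{k,j}=\alpha_k w_{k,j}+\sum_{l\in\mathbb{Z}_K^*}\beta_k^l b_{k,j}^l+\sum_{l\in\mathbb{Z}_K^*}\gamma_k^l r_{k,j}^l+\sum_{l\in\mathbb{Z}_K^*}\sum_{l'\in\mathbb{Z}_K^*,l'\ne l}\lambda_k^{k-l,k-l'}p_{k,j}^{l,l'}$, $B_{k,j}(u)=G_{k,j}-G_{k,j-1}$. (C1) $\beta_k^a=2\gamma_{k+a}^a$ for all $k$, $a\in\mathbb{Z}_K^*$; (C2) $\lambda_k^{k-a,k-a'}=\lambda_k^{k-a',k-a}=\lambda_{k-a}^{k,k-a'}$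 for all $k$ and $a,a'\in\mathbb{Z}_K^*$, $a\ne a'$. $\mu_{K,M}$ is the product standard Gaussian measure on $\mathbb{R}^{\mathbb{Z}_K\times\mathbb{Z}_M}$. $\mathscr{C}$ is the space of $C^2$ functions $\mathbb{R}^{\mathbb{Z}_K\times\mathbb{Z}_M}\to\mathbb{R}$ whose derivatives up to order two grow at most polynomially; $\partial_{k,j}=\partial/\partial u_{k,j}$. *)

theory Defs
  imports "HOL-Probability.Probability"
begin

text \<open>Configurations u are functions on the index set Z_K x Z_M, represented by
  {0..<K} x {0..<M} (integers); indices are always reduced mod K resp. mod M.
  Outside the index set u is arbitrary (in the product measure space it is undefined).\<close>

definition idx :: "int \<Rightarrow> int \<Rightarrow> (int \<times> int) set" where
  "idx K M = {0..<K} \<times> {0..<M}"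

definition cfg :: "int \<Rightarrow> int \<Rightarrow> (int \<times> int \<Rightarrow> real) set" where
  "cfg K M = PiE (idx K M) (\<lambda>_. UNIV)"

definition U :: "int \<Rightarrow> int \<Rightarrow> (int \<times> int \<Rightarrow> real) \<Rightarrow> int \<Rightarrow> int \<Rightarrow> real" where
  "U K M u k j = u (k mod K, j mod M)"

definition pd :: "int \<Rightarrow> int \<Rightarrow> int \<Rightarrow> int \<Rightarrow> ((int \<times> int \<Rightarrow> real) \<Rightarrow> real)
    \<Rightarrow> (int \<times> int \<Rightarrow> real) \<Rightarrow> real" where
  "pd K M k j f u = deriv (\<lambda>t. f (u((k mod K, j mod M) := t))) (u (k mod K, j mod M))"

definition partially_diff :: "int \<Rightarrow> int \<Rightarrow> ((int \<times> int \<Rightarrow> real) \<Rightarrow> real) \<Rightarrow> bool" where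
  "partially_diff K M f \<longleftrightarrow> (\<forall>i\<in>idx K M. \<forall>u\<in>cfg K M.
      (\<lambda>t. f (u(i := t))) differentiable (at (u i)))"

definition poly_growth :: "int \<Rightarrow> int \<Rightarrow> ((int \<times> int \<Rightarrow> real) \<Rightarrow> real) \<Rightarrow> bool" where
  "poly_growth K M f \<longleftrightarrow> (\<exists>C (N::nat). \<forall>u\<in>cfg K M.
      \<bar>f u\<bar> \<le> C * (1 + (\<Sum>i\<in>idx K M. (u i)\<^sup>2)) ^ N)"

definition classC :: "int \<Rightarrow> int \<Rightarrow> ((int \<times> int \<Rightarrow> real) \<Rightarrow> real) set" where
  "classC K M = {f.
      continuous_on (cfg K M) f \<and> poly_growth K M f \<and> partially_diff K M f \<and>
      (\<forall>(k,j)\<in>idx K M. continuous_on (cfg K M) (pd K M k j f) \<and> poly_growth K M (pd K M k j f)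
         \<and> partially_diff K M (pd K M k j f) \<and>
         (\<forall>(k',j')\<in>idx K M. continuous_on (cfg K M) (pd K M k' j' (pd K M k j f))
            \<and> poly_growth K M (pd K M k' j' (pd K M k j f))))}"

definition mu :: "int \<Rightarrow> int \<Rightarrow> (int \<times> int \<Rightarrow> real) measure" where
  "mu K M = PiM (idx K M) (\<lambda>_. density lborel std_normal_density)"

definition w_fn where
  "w_fn K M u k j = (1/3) * ((U K M u k j)\<^sup>2 + U K M u k j * U K M u k (j+1) + (U K M u k (j+1))\<^sup>2)"

definition b_fn where
  "b_fn K M u l k j = (1/2) * (U K M u k j * U K M u (k+l) j + U K M u k (j+1) * U K M u (k+l) (j+1))"

definition r_fn where
  "r_fn K M u l k j = U K M u (k-l) j * U K M u (k-l) (j+1)"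

definition p_fn where
  "p_fn K M u l l' k j = (1/6) * (2 * U K M u (k-l) j * U K M u (k-l') j
      + U K M u (k-l) j * U K M u (k-l') (j+1) + U K M u (k-l) (j+1) * U K M u (k-l') j
      + 2 * U K M u (k-l) (j+1) * U K M u (k-l') (j+1))"

text \<open>Coefficients: alpha k = alpha_k, beta k l = beta_k^l, gamma k l = gamma_k^l,
  lam k a b = lambda_k^{a,b}; all indices are elements of {0..<K} (= Z_K).\<close>
definition G_fn :: "int \<Rightarrow> int \<Rightarrow> (int \<Rightarrow> real) \<Rightarrow> (int \<Rightarrow> int \<Rightarrow> real) \<Rightarrow> (int \<Rightarrow> int \<Rightarrow> real)
    \<Rightarrow> (int \<Rightarrow> int \<Rightarrow> int \<Rightarrow> real) \<Rightarrow> (int \<times> int \<Rightarrow> real) \<Rightarrow> int \<Rightarrow> int \<Rightarrow> real" where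
  "G_fn K M \<alpha> \<beta> \<gamma> lam u k j =
      \<alpha> (k mod K) * w_fn K M u k j
    + (\<Sum>l\<in>{1..<K}. \<beta> (k mod K) l * b_fn K M u l k j)
    + (\<Sum>l\<in>{1..<K}. \<gamma> (k mod K) l * r_fn K M u l k j)
    + (\<Sum>l\<in>{1..<K}. \<Sum>l'\<in>{1..<K} - {l}.
         lam (k mod K) ((k - l) mod K) ((k - l') mod K) * p_fn K M u l l' k j)"

definition B_fn where
  "B_fn K M \<alpha> \<beta> \<gamma> lam u k j = G_fn K M \<alpha> \<beta> \<gamma> lam u k j - G_fn K M \<alpha> \<beta> \<gamma> lam u k (j-1)"

definition cond_C1 :: "int \<Rightarrow> (int \<Rightarrow> int \<Rightarrow> real) \<Rightarrow> (int \<Rightarrow> int \<Rightarrow> real) \<Rightarrow> bool" where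
  "cond_C1 K \<beta> \<gamma> \<longleftrightarrow> (\<forall>k\<in>{0..<K}. \<forall>a\<in>{1..<K}. \<beta> k a = 2 * \<gamma> ((k + a) mod K) a)"

definition cond_C2 :: "int \<Rightarrow> (int \<Rightarrow> int \<Rightarrow> int \<Rightarrow> real) \<Rightarrow> bool" where
  "cond_C2 K lam \<longleftrightarrow> (\<forall>k\<in>{0..<K}. \<forall>a\<in>{1..<K}. \<forall>a'\<in>{1..<K}. a \<noteq> a' \<longrightarrow>
      lam k ((k - a) mod K) ((k - a') mod K) = lam k ((k - a') mod K) ((k - a) mod K) \<and>
      lam k ((k - a') mod K) ((k - a) mod K) = lam ((k - a) mod K) k ((k - a') mod K))"

text \<open>Generator with drift coefficient c: L = gen eps, L^* = gen (-eps).
  (d_{k,j+1} - d_{k,j})^2 expanded as a second-order operator.\<close>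
definition gen :: "int \<Rightarrow> int \<Rightarrow> (int \<Rightarrow> real) \<Rightarrow> (int \<Rightarrow> int \<Rightarrow> real) \<Rightarrow> (int \<Rightarrow> int \<Rightarrow> real)
    \<Rightarrow> (int \<Rightarrow> int \<Rightarrow> int \<Rightarrow> real) \<Rightarrow> real \<Rightarrow> ((int \<times> int \<Rightarrow> real) \<Rightarrow> real)
    \<Rightarrow> (int \<times> int \<Rightarrow> real) \<Rightarrow> real" where
  "gen K M \<alpha> \<beta> \<gamma> lam c f u = (\<Sum>k\<in>{0..<K}. \<Sum>j\<in>{0..<M}.
      (1/2) * (pd K M k (j+1) (pd K M k (j+1) f) u - pd K M k (j+1) (pd K M k j f) u
               - pd K M k j (pd K M k (j+1) f) u + pd K M k j (pd K M k j f) u)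
    - (1/2) * (U K M u k (j+1) - U K M u k j) * (pd K M k (j+1) f u - pd K M k j f u)
    + c * B_fn K M \<alpha> \<beta> \<gamma> lam u k j * pd K M k j f u)"

end

theory Submission
  imports Defs "HOL-Real_Asymp.Real_Asymp"
begin

text \<open>Every term of the generator is a first or second derivative, so the proof is Gaussian
  integration by parts, one coordinate at a time:
  \<open>\<integral> \<partial>\<^sub>i h \<cdot> g d\<mu> = \<integral> h (u\<^sub>i g - \<partial>\<^sub>i g) d\<mu>\<close>.
  With \<open>D = \<partial>\<^sub>k\<^sub>,\<^sub>j\<^sub>+\<^sub>1 - \<partial>\<^sub>k\<^sub>,\<^sub>j\<close>, the symmetric part \<open>1/2 D\<^sup>2 - 1/2 (u\<^sub>k\<^sub>,\<^sub>j\<^sub>+\<^sub>1 - u\<^sub>k\<^sub>,\<^sub>j) D\<close>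
  moves to the other side unchanged, whereas the drift \<open>\<epsilon> B\<^sub>k\<^sub>,\<^sub>j \<partial>\<^sub>k\<^sub>,\<^sub>j\<close> turns into
  \<open>-\<epsilon> B\<^sub>k\<^sub>,\<^sub>j \<partial>\<^sub>k\<^sub>,\<^sub>j\<close> up to the error \<open>\<epsilon> f g (u\<^sub>k\<^sub>,\<^sub>j B\<^sub>k\<^sub>,\<^sub>j - \<partial>\<^sub>k\<^sub>,\<^sub>j B\<^sub>k\<^sub>,\<^sub>j)\<close>.
  Summed over all sites this error vanishes identically: \<open>\<partial>\<^sub>k\<^sub>,\<^sub>j B\<^sub>k\<^sub>,\<^sub>j\<close> is a difference that
  telescopes in \<open>j\<close>, and in \<open>\<Sum> u\<^sub>k\<^sub>,\<^sub>j B\<^sub>k\<^sub>,\<^sub>j\<close>, after summation by parts in \<open>j\<close>, the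
  \<open>\<alpha>\<close>-terms telescope, the \<open>\<beta>\<close>- and \<open>\<gamma>\<close>-terms cancel by (C1), and the \<open>\<lambda>\<close>-terms
  cancel in cyclic triples of components by (C2).\<close>

section \<open>Gaussian integrals on the real line\<close>

abbreviation gauss :: "real measure" where
  "gauss \<equiv> density lborel std_normal_density"

lemma one_plus_power_le_exp:
  fixes z :: real assumes "z \<ge> 0"
  shows "(1 + z) ^ N \<le> (16 * (real N + 1)) ^ N * exp (z / 16)"
proof -
  define c where "c = 16 * (real N + 1)"
  have c1: "c \<ge> 1" by (simp add: c_def)
  have "1 + z \<le> c * (1 + z / c)" using c1 assms by (simp add: field_simps)
  then have "(1 + z) ^ N \<le> (c * (1 + z / c)) ^ N" by (intro power_mono) (use assms in auto)
  also have "\<dots> = c ^ N * (1 + z / c) ^ N" by (simp add: power_mult_distrib)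
  also have "(1 + z / c) ^ N \<le> exp (z / c) ^ N"
    by (intro power_mono) (use assms c1 in auto)
  also have "exp (z / c) ^ N = exp (real N * z / c)" by (simp add: exp_of_nat_mult[symmetric])
  also have "\<dots> \<le> exp (z / 16)"
    using assms c1 unfolding c_def by (simp add: field_simps mult_right_mono)
  finally show ?thesis using c1 unfolding c_def by (simp add: mult_left_mono)
qed

lemma abs_le_exp_square: "\<bar>y :: real\<bar> \<le> 2 * exp (y\<^sup>2 / 16)"
proof -
  have "0 \<le> (\<bar>y\<bar> - 4)\<^sup>2" by simp
  then have "\<bar>y\<bar> \<le> 2 * (1 + y\<^sup>2 / 16)" by (simp add: power2_eq_square field_simps abs_mult_self_eq)
  also have "\<dots> \<le> 2 * exp (y\<^sup>2 / 16)"
    by (intro mult_left_mono) (use exp_ge_add_one_self[of "y\<^sup>2 / 16"] in auto)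
  finally show ?thesis .
qed

lemma std_normal_density_eq: "std_normal_density y = 1 / sqrt (2 * pi) * exp (- y\<^sup>2 / 2)"
  by (simp add: std_normal_density_def)

lemma two_normal_density_0_2: "2 * normal_density 0 2 y = 1 / sqrt (2 * pi) * exp (- (y\<^sup>2 / 8))"
proof -
  have "2 * pi * 2\<^sup>2 = 2\<^sup>2 * (2 * pi)" by simp
  then have "sqrt (2 * pi * 2\<^sup>2) = 2 * sqrt (2 * pi)" by (simp only: real_sqrt_mult) simp
  then show ?thesis by (simp add: normal_density_def power2_eq_square)
qed

lemma std_normal_density_mult_exp_le:
  "std_normal_density y * exp (3 * y\<^sup>2 / 16) \<le> 2 * normal_density 0 2 y"
proof -
  have "exp (- y\<^sup>2 / 2) * exp (3 * y\<^sup>2 / 16) \<le> exp (- (y\<^sup>2 / 8))"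
    by (simp add: exp_add[symmetric])
  then show ?thesis
    unfolding std_normal_density_eq two_normal_density_0_2 by (simp add: divide_right_mono)
qed

lemma integrable_std_normal_density_mult:
  fixes P :: "real \<Rightarrow> real"
  assumes "continuous_on UNIV P" and "\<And>y. \<bar>P y\<bar> \<le> E * exp (3 * y\<^sup>2 / 16)"
  shows "integrable lborel (\<lambda>y. std_normal_density y * P y)"
proof (rule Bochner_Integration.integrable_bound)
  show "integrable lborel (\<lambda>y. E * (2 * normal_density 0 2 y))" by simp
  have [measurable]: "P \<in> borel_measurable borel"
    using assms(1) by (rule borel_measurable_continuous_onI)
  show "(\<lambda>y. std_normal_density y * P y) \<in> borel_measurable lborel" by measurable
  have E: "E \<ge> 0" using assms(2)[of 0] by simp
  show "AE y in lborel. norm (std_normal_density y * P y) \<le> norm (E * (2 * normal_density 0 2 y))"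
  proof (rule AE_I2)
    fix y
    have "\<bar>std_normal_density y * P y\<bar> \<le> std_normal_density y * (E * exp (3 * y\<^sup>2 / 16))"
      by (simp add: abs_mult mult_left_mono assms(2))
    also have "\<dots> \<le> E * (2 * normal_density 0 2 y)"
      using mult_left_mono[OF std_normal_density_mult_exp_le E] by (simp add: mult_ac)
    finally show "norm (std_normal_density y * P y) \<le> norm (E * (2 * normal_density 0 2 y))"
      using E by simp
  qed
qed

lemma integrable_gauss_exp_square: "integrable gauss (\<lambda>x. exp (x\<^sup>2 / 16))"
proof -
  have "integrable lborel (\<lambda>x. std_normal_density x * exp (x\<^sup>2 / 16))"
    by (rule integrable_std_normal_density_mult[where E = 1]) (auto intro!: continuous_intros)
  then show ?thesis by (subst integrable_density) auto
qed

lemma integral_lborel_derivative_eq_0: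
  fixes F f :: "real \<Rightarrow> real"
  assumes "\<And>y. (F has_real_derivative f y) (at y)" and "continuous_on UNIV f"
    and "integrable lborel f" and "(F \<longlongrightarrow> 0) at_top" and "(F \<longlongrightarrow> 0) at_bot"
  shows "integral\<^sup>L lborel f = 0"
proof -
  have "(LBINT x=-\<infinity>..\<infinity>. f x) = 0 - 0"
  proof (rule interval_integral_FTC_integrable)
    show "((F \<circ> real_of_ereal) \<longlongrightarrow> 0) (at_right (-\<infinity>))"
      using assms(5) by (simp add: ereal_tendsto_simps)
    show "((F \<circ> real_of_ereal) \<longlongrightarrow> 0) (at_left \<infinity>)"
      using assms(4) by (simp add: ereal_tendsto_simps)
    show "set_integrable lborel (einterval (-\<infinity>) \<infinity>) f"
      using assms(3) by (simp add: set_integrable_def)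
  qed (use assms(1,2) in \<open>auto simp: has_real_derivative_iff_has_vector_derivative[symmetric]
                                       continuous_on_eq_continuous_at\<close>)
  then show ?thesis by (simp add: interval_lebesgue_integral_def set_lebesgue_integral_def)
qed

lemma std_normal_density_has_real_derivative:
  "(std_normal_density has_real_derivative (- y * std_normal_density y)) (at y)"
proof -
  have "((\<lambda>y. exp (- y\<^sup>2 / 2)) has_real_derivative (- y * exp (- y\<^sup>2 / 2))) (at y)"
    by (auto intro!: derivative_eq_intros simp: power2_eq_square)
  from DERIV_cmult[OF this, of "1 / sqrt (2 * pi)"] show ?thesis
    unfolding std_normal_density_eq[abs_def] by (simp add: mult_ac)
qed

lemma abs_mult_le_exp_square:
  fixes a b y :: real
  assumes a: "\<bar>a\<bar> \<le> D * exp (y\<^sup>2 / 16)" and b: "\<bar>b\<bar> \<le> D * exp (y\<^sup>2 / 16)"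
  shows "\<bar>a * b\<bar> \<le> D * D * exp (3 * y\<^sup>2 / 16)"
    and "\<bar>y * (a * b)\<bar> \<le> 2 * D * D * exp (3 * y\<^sup>2 / 16)"
proof -
  have "0 \<le> D * exp (y\<^sup>2 / 16)" using a abs_ge_zero[of a] by linarith
  then have D: "D \<ge> 0" by (simp add: zero_le_mult_iff)
  have "\<bar>a * b\<bar> \<le> (D * exp (y\<^sup>2 / 16)) * (D * exp (y\<^sup>2 / 16))"
    unfolding abs_mult by (intro mult_mono a b) (auto simp: D)
  also have "\<dots> \<le> D * D * exp (3 * y\<^sup>2 / 16)"
    using mult_left_mono[of "exp (y\<^sup>2 / 16) * exp (y\<^sup>2 / 16)" "exp (3 * y\<^sup>2 / 16)" "D * D"]
    by (simp add: mult_ac exp_add[symmetric])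
  finally show "\<bar>a * b\<bar> \<le> D * D * exp (3 * y\<^sup>2 / 16)" .
  have "\<bar>y * (a * b)\<bar> \<le> (2 * exp (y\<^sup>2 / 16)) * ((D * exp (y\<^sup>2 / 16)) * (D * exp (y\<^sup>2 / 16)))"
    unfolding abs_mult by (intro mult_mono abs_le_exp_square a b) (auto simp: D)
  also have "\<dots> = 2 * D * D * exp (3 * y\<^sup>2 / 16)"
    by (simp add: exp_add[symmetric] mult_ac)
  finally show "\<bar>y * (a * b)\<bar> \<le> 2 * D * D * exp (3 * y\<^sup>2 / 16)" .
qed

lemma tendsto_0_if_le_exp_neg_square:
  fixes F :: "real \<Rightarrow> real"
  assumes "\<And>y. \<bar>F y\<bar> \<le> C * exp (- (y\<^sup>2 / 8))"
  shows "(F \<longlongrightarrow> 0) at_top" and "(F \<longlongrightarrow> 0) at_bot"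
proof -
  have bound: "\<forall>y. norm (F y) \<le> C * exp (- (y\<^sup>2 / 8))" using assms by simp
  have lim: "(F \<longlongrightarrow> 0) F'" if "((\<lambda>y::real. exp (- (y\<^sup>2 / 8))) \<longlongrightarrow> 0) F'" for F'
    by (rule Lim_null_comparison[OF always_eventually[OF bound]])
       (use tendsto_mult_right_zero[OF that, of C] in simp)
  show "(F \<longlongrightarrow> 0) at_top" by (rule lim) real_asymp
  show "(F \<longlongrightarrow> 0) at_bot" by (rule lim) real_asymp
qed

text \<open>The boundary term of the integration by parts is \<open>H G \<phi>\<close>, which decays like
  \<open>exp (- y\<^sup>2 / 8)\<close> under the growth bounds.\<close>

lemma gauss_integration_by_parts_lborel:
  fixes H G H' G' :: "real \<Rightarrow> real"
  assumes dH: "\<And>y. (H has_real_derivative H' y) (at y)"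
    and dG: "\<And>y. (G has_real_derivative G' y) (at y)"
    and cH': "continuous_on UNIV H'" and cG': "continuous_on UNIV G'"
    and bH: "\<And>y. \<bar>H y\<bar> \<le> D * exp (y\<^sup>2 / 16)" and bG: "\<And>y. \<bar>G y\<bar> \<le> D * exp (y\<^sup>2 / 16)"
    and bH': "\<And>y. \<bar>H' y\<bar> \<le> D * exp (y\<^sup>2 / 16)" and bG': "\<And>y. \<bar>G' y\<bar> \<le> D * exp (y\<^sup>2 / 16)"
  shows "integrable lborel (\<lambda>y. std_normal_density y * (H' y * G y))"
    and "integrable lborel (\<lambda>y. std_normal_density y * (H y * G' y))"
    and "integrable lborel (\<lambda>y. std_normal_density y * (y * (H y * G y)))"
    and "(\<integral>y. std_normal_density y * (H' y * G y) \<partial>lborel)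
         = (\<integral>y. std_normal_density y * (y * (H y * G y)) \<partial>lborel)
           - (\<integral>y. std_normal_density y * (H y * G' y) \<partial>lborel)"
proof -
  have cH: "continuous_on UNIV H" and cG: "continuous_on UNIV G"
    using dH dG by (meson DERIV_isCont continuous_at_imp_continuous_on)+
  show i1: "integrable lborel (\<lambda>y. std_normal_density y * (H' y * G y))"
    by (rule integrable_std_normal_density_mult[where E = "D * D"])
       (auto intro!: continuous_intros cH' cG abs_mult_le_exp_square bH' bG)
  show i2: "integrable lborel (\<lambda>y. std_normal_density y * (H y * G' y))"
    by (rule integrable_std_normal_density_mult[where E = "D * D"])
       (auto intro!: continuous_intros cH cG' abs_mult_le_exp_square bH bG')
  show i3: "integrable lborel (\<lambda>y. std_normal_density y * (y * (H y * G y)))"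
    by (rule integrable_std_normal_density_mult[where E = "2 * D * D"])
       (auto intro!: continuous_intros cH cG abs_mult_le_exp_square bH bG)
  define F where "F y = H y * G y * std_normal_density y" for y
  define f where "f y = std_normal_density y * (H' y * G y) + std_normal_density y * (H y * G' y)
      - std_normal_density y * (y * (H y * G y))" for y
  have F_bound: "\<bar>F y\<bar> \<le> D * D * exp (- (y\<^sup>2 / 8))" for y
  proof -
    have "std_normal_density y \<le> exp (- y\<^sup>2 / 2)"
      using pi_gt3 unfolding std_normal_density_eq by (simp add: field_simps)
    then have "\<bar>F y\<bar> \<le> (D * D * exp (3 * y\<^sup>2 / 16)) * exp (- y\<^sup>2 / 2)"
      unfolding F_def abs_mult[of "H y * G y"] using abs_mult_le_exp_square(1)[OF bH bG]
      by (intro mult_mono) auto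
    also have "\<dots> \<le> D * D * exp (- (y\<^sup>2 / 8))"
      using mult_left_mono[of "exp (3 * y\<^sup>2 / 16) * exp (- y\<^sup>2 / 2)" "exp (- (y\<^sup>2 / 8))" "D * D"]
      by (simp add: mult.assoc exp_add[symmetric])
    finally show ?thesis .
  qed
  have "integral\<^sup>L lborel f = 0"
  proof (rule integral_lborel_derivative_eq_0)
    show "(F has_real_derivative f y) (at y)" for y
      unfolding F_def f_def
      by (auto intro!: derivative_eq_intros dH dG std_normal_density_has_real_derivative simp: algebra_simps)
    show "continuous_on UNIV f"
      unfolding f_def std_normal_density_def[abs_def]
      by (auto intro!: continuous_intros cH cG cH' cG')
    show "integrable lborel f" unfolding f_def using i1 i2 i3 by auto
  qed (use tendsto_0_if_le_exp_neg_square[OF F_bound] in auto)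
  then show "(\<integral>y. std_normal_density y * (H' y * G y) \<partial>lborel)
         = (\<integral>y. std_normal_density y * (y * (H y * G y)) \<partial>lborel)
           - (\<integral>y. std_normal_density y * (H y * G' y) \<partial>lborel)"
    unfolding f_def[abs_def] using i1 i2 i3 by simp
qed


section \<open>Continuous functions of polynomial growth\<close>

lemma finite_idx [simp]: "finite (idx K M)"
  by (simp add: idx_def)

lemma space_mu: "space (mu K M) = cfg K M"
  by (simp add: mu_def cfg_def space_PiM)

lemma product_sigma_finite_gauss: "product_sigma_finite (\<lambda>_ :: int \<times> int. gauss)"
proof -
  interpret prob_space gauss by (rule prob_space_normal_density) simp
  show ?thesis unfolding product_sigma_finite_def by (simp add: sigma_finite_measure_axioms)
qed

text \<open>The points of \<open>cfg K M\<close> are extensional, so a function continuous there is composed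
  with the (continuous) restriction to \<open>idx K M\<close> and with the (measurable) extension by zero.\<close>

lemma borel_measurable_mu_of_continuous:
  assumes "continuous_on (cfg K M) F"
  shows "F \<in> borel_measurable (mu K M)"
proof -
  define e where "e = (\<lambda>u :: int \<times> int \<Rightarrow> real. \<lambda>i. if i \<in> idx K M then u i else 0)"
  have e: "e \<in> borel_measurable (mu K M)"
    unfolding e_def
  proof (rule measurable_coordinatewise_then_product)
    fix i
    show "(\<lambda>x. if i \<in> idx K M then x i else 0) \<in> borel_measurable (mu K M)"
    proof (cases "i \<in> idx K M")
      case True
      then show ?thesis unfolding mu_def
        by (simp add: measurable_component_singleton[OF True, of "\<lambda>_. gauss", simplified])
    qed simp
  qed
  define R where "R = (\<lambda>v :: int \<times> int \<Rightarrow> real. restrict v (idx K M))"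
  have R: "continuous_on UNIV R"
    unfolding R_def
  proof (intro continuous_on_coordinatewise_then_product)
    fix i
    show "continuous_on UNIV (\<lambda>x :: int \<times> int \<Rightarrow> real. restrict x (idx K M) i)"
      by (cases "i \<in> idx K M") auto
  qed
  have "R ` UNIV \<subseteq> cfg K M" by (auto simp: R_def cfg_def)
  then have "continuous_on UNIV (F \<circ> R)"
    using continuous_on_compose[OF R continuous_on_subset[OF assms]] by blast
  then have "F \<circ> R \<circ> e \<in> borel_measurable (mu K M)"
    using e by (simp add: borel_measurable_continuous_onI measurable_comp)
  moreover have "(F \<circ> R \<circ> e) u = F u" if "u \<in> space (mu K M)" for u
  proof -
    have "restrict (e u) (idx K M) = u"
      using that by (auto simp: space_mu e_def cfg_def restrict_def PiE_def extensional_def)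
    then show ?thesis by (simp add: R_def)
  qed
  ultimately show ?thesis by (rule measurable_cong[THEN iffD1, rotated]) simp
qed

lemma poly_growthE:
  assumes "poly_growth K M f"
  obtains C N where "C \<ge> 0" and "\<And>u. u \<in> cfg K M \<Longrightarrow> \<bar>f u\<bar> \<le> C * (1 + (\<Sum>i\<in>idx K M. (u i)\<^sup>2)) ^ N"
proof -
  obtain C N where CN: "\<forall>u\<in>cfg K M. \<bar>f u\<bar> \<le> C * (1 + (\<Sum>i\<in>idx K M. (u i)\<^sup>2)) ^ N"
    using assms unfolding poly_growth_def by blast
  have "\<bar>f u\<bar> \<le> \<bar>C\<bar> * (1 + (\<Sum>i\<in>idx K M. (u i)\<^sup>2)) ^ N" if "u \<in> cfg K M" for u
  proof -
    have "0 \<le> (1 + (\<Sum>i\<in>idx K M. (u i)\<^sup>2)) ^ N" by (simp add: sum_nonneg)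
    then have "C * (1 + (\<Sum>i\<in>idx K M. (u i)\<^sup>2)) ^ N \<le> \<bar>C\<bar> * (1 + (\<Sum>i\<in>idx K M. (u i)\<^sup>2)) ^ N"
      by (intro mult_right_mono) auto
    then show ?thesis using CN that by auto
  qed
  then show ?thesis using that[of "\<bar>C\<bar>"] by auto
qed

lemma poly_growth_add:
  assumes "poly_growth K M f" and "poly_growth K M g"
  shows "poly_growth K M (\<lambda>u. f u + g u)"
proof -
  obtain C1 N1 where C1: "C1 \<ge> 0" "\<And>u. u \<in> cfg K M \<Longrightarrow> \<bar>f u\<bar> \<le> C1 * (1 + (\<Sum>i\<in>idx K M. (u i)\<^sup>2)) ^ N1"
    using assms(1) by (rule poly_growthE) blast
  obtain C2 N2 where C2: "C2 \<ge> 0" "\<And>u. u \<in> cfg K M \<Longrightarrow> \<bar>g u\<bar> \<le> C2 * (1 + (\<Sum>i\<in>idx K M. (u i)\<^sup>2)) ^ N2"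
    using assms(2) by (rule poly_growthE) blast
  show ?thesis unfolding poly_growth_def
  proof (intro exI[of _ "C1 + C2"] exI[of _ "N1 + N2"] ballI)
    fix u assume u: "u \<in> cfg K M"
    define s where "s = 1 + (\<Sum>i\<in>idx K M. (u i)\<^sup>2)"
    have s: "s \<ge> 1" unfolding s_def by (simp add: sum_nonneg)
    have "\<bar>f u + g u\<bar> \<le> C1 * s ^ N1 + C2 * s ^ N2"
      using C1(2)[OF u] C2(2)[OF u] abs_triangle_ineq[of "f u" "g u"] unfolding s_def by linarith
    also have "\<dots> \<le> C1 * s ^ (N1 + N2) + C2 * s ^ (N1 + N2)"
      using s C1(1) C2(1) by (intro add_mono mult_left_mono power_increasing) auto
    finally show "\<bar>f u + g u\<bar> \<le> (C1 + C2) * (1 + (\<Sum>i\<in>idx K M. (u i)\<^sup>2)) ^ (N1 + N2)"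
      unfolding s_def by (simp add: algebra_simps)
  qed
qed

lemma poly_growth_mult:
  assumes "poly_growth K M f" and "poly_growth K M g"
  shows "poly_growth K M (\<lambda>u. f u * g u)"
proof -
  obtain C1 N1 where C1: "C1 \<ge> 0" "\<And>u. u \<in> cfg K M \<Longrightarrow> \<bar>f u\<bar> \<le> C1 * (1 + (\<Sum>i\<in>idx K M. (u i)\<^sup>2)) ^ N1"
    using assms(1) by (rule poly_growthE) blast
  obtain C2 N2 where C2: "C2 \<ge> 0" "\<And>u. u \<in> cfg K M \<Longrightarrow> \<bar>g u\<bar> \<le> C2 * (1 + (\<Sum>i\<in>idx K M. (u i)\<^sup>2)) ^ N2"
    using assms(2) by (rule poly_growthE) blast
  show ?thesis unfolding poly_growth_def
  proof (intro exI[of _ "C1 * C2"] exI[of _ "N1 + N2"] ballI)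
    fix u assume u: "u \<in> cfg K M"
    define s where "s = 1 + (\<Sum>i\<in>idx K M. (u i)\<^sup>2)"
    have "\<bar>f u * g u\<bar> \<le> (C1 * s ^ N1) * (C2 * s ^ N2)"
      unfolding abs_mult s_def using C1 C2 u by (intro mult_mono) (auto simp: sum_nonneg)
    then show "\<bar>f u * g u\<bar> \<le> (C1 * C2) * (1 + (\<Sum>i\<in>idx K M. (u i)\<^sup>2)) ^ (N1 + N2)"
      unfolding s_def by (simp add: algebra_simps power_add)
  qed
qed

lemma poly_growth_const: "poly_growth K M (\<lambda>u. c)"
  unfolding poly_growth_def by (intro exI[of _ "\<bar>c\<bar>"] exI[of _ 0]) auto

lemma poly_growth_diff:
  assumes "poly_growth K M f" and "poly_growth K M g"
  shows "poly_growth K M (\<lambda>u. f u - g u)"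
proof -
  have "poly_growth K M (\<lambda>u. - g u)" using assms(2) unfolding poly_growth_def by auto
  from poly_growth_add[OF assms(1) this] show ?thesis by simp
qed

lemma poly_growth_coordinate:
  assumes "i \<in> idx K M"
  shows "poly_growth K M (\<lambda>u. u i)"
  unfolding poly_growth_def
proof (intro exI[of _ 1] exI[of _ 1] ballI)
  fix u :: "int \<times> int \<Rightarrow> real"
  have "0 \<le> (\<bar>u i\<bar> - 1)\<^sup>2" by simp
  then have "\<bar>u i\<bar> \<le> 1 + (u i)\<^sup>2" by (simp add: power2_eq_square algebra_simps abs_mult_self_eq)
  also have "(u i)\<^sup>2 \<le> (\<Sum>i\<in>idx K M. (u i)\<^sup>2)"
    using assms by (intro member_le_sum) auto
  finally show "\<bar>u i\<bar> \<le> 1 * (1 + (\<Sum>i\<in>idx K M. (u i)\<^sup>2)) ^ 1" by simp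
qed

definition moderate :: "int \<Rightarrow> int \<Rightarrow> ((int \<times> int \<Rightarrow> real) \<Rightarrow> real) \<Rightarrow> bool" where
  "moderate K M h \<longleftrightarrow> continuous_on (cfg K M) h \<and> poly_growth K M h"

lemma moderate_add: "moderate K M f \<Longrightarrow> moderate K M g \<Longrightarrow> moderate K M (\<lambda>u. f u + g u)"
  unfolding moderate_def by (auto intro: poly_growth_add continuous_on_add)

lemma moderate_diff: "moderate K M f \<Longrightarrow> moderate K M g \<Longrightarrow> moderate K M (\<lambda>u. f u - g u)"
  unfolding moderate_def by (auto intro: poly_growth_diff continuous_on_diff)

lemma moderate_mult: "moderate K M f \<Longrightarrow> moderate K M g \<Longrightarrow> moderate K M (\<lambda>u. f u * g u)"
  unfolding moderate_def by (auto intro: poly_growth_mult continuous_on_mult)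

lemma moderate_const: "moderate K M (\<lambda>u. c)"
  unfolding moderate_def by (auto intro: poly_growth_const)

lemma moderate_coordinate: "i \<in> idx K M \<Longrightarrow> moderate K M (\<lambda>u. u i)"
  unfolding moderate_def
  by (auto intro: poly_growth_coordinate continuous_on_subset[OF continuous_on_product_coordinates])

lemma moderate_sum:
  "finite A \<Longrightarrow> (\<And>a. a \<in> A \<Longrightarrow> moderate K M (f a)) \<Longrightarrow> moderate K M (\<lambda>u. \<Sum>a\<in>A. f a u)"
  by (induction A rule: finite_induct) (auto intro: moderate_add moderate_const)

lemma moderate_cong:
  assumes "moderate K M f" and "\<And>u. u \<in> cfg K M \<Longrightarrow> f u = g u"
  shows "moderate K M g"
proof -
  have "continuous_on (cfg K M) f" using assms(1) unfolding moderate_def by simp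
  then have "continuous_on (cfg K M) g" using assms(2) by (rule continuous_on_eq)
  moreover obtain C N where "\<forall>u\<in>cfg K M. \<bar>f u\<bar> \<le> C * (1 + (\<Sum>i\<in>idx K M. (u i)\<^sup>2)) ^ N"
    using assms(1) unfolding moderate_def poly_growth_def by blast
  then have "poly_growth K M g"
    using assms(2) unfolding poly_growth_def by auto
  ultimately show ?thesis unfolding moderate_def by simp
qed

lemma integrable_moderate:
  assumes "moderate K M F"
  shows "integrable (mu K M) F"
proof -
  interpret product_sigma_finite "\<lambda>_ :: int \<times> int. gauss" by (rule product_sigma_finite_gauss)
  have "poly_growth K M F" using assms unfolding moderate_def by simp
  then obtain C N where C: "C \<ge> 0" "\<And>u. u \<in> cfg K M \<Longrightarrow> \<bar>F u\<bar> \<le> C * (1 + (\<Sum>i\<in>idx K M. (u i)\<^sup>2)) ^ N"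
    by (rule poly_growthE) blast
  define A where "A = (16 * (real N + 1)) ^ N"
  have A: "A \<ge> 0" by (simp add: A_def)
  have "integrable (mu K M) (\<lambda>x. \<Prod>i\<in>idx K M. exp ((x i)\<^sup>2 / 16))"
    unfolding mu_def by (rule product_integrable_prod) (auto intro: integrable_gauss_exp_square)
  then have I: "integrable (mu K M) (\<lambda>x. C * A * (\<Prod>i\<in>idx K M. exp ((x i)\<^sup>2 / 16)))"
    by simp
  show ?thesis
  proof (rule Bochner_Integration.integrable_bound[OF I])
    show "F \<in> borel_measurable (mu K M)"
      using assms unfolding moderate_def by (blast intro: borel_measurable_mu_of_continuous)
    show "AE x in mu K M. norm (F x) \<le> norm (C * A * (\<Prod>i\<in>idx K M. exp ((x i)\<^sup>2 / 16)))"
    proof (rule AE_I2)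
      fix u assume "u \<in> space (mu K M)"
      then have u: "u \<in> cfg K M" by (simp add: space_mu)
      define s where "s = (\<Sum>i\<in>idx K M. (u i)\<^sup>2)"
      have s: "s \<ge> 0" unfolding s_def by (simp add: sum_nonneg)
      have "\<bar>F u\<bar> \<le> C * (1 + s) ^ N" using C(2)[OF u] unfolding s_def .
      also have "\<dots> \<le> C * (A * exp (s / 16))"
        using one_plus_power_le_exp[OF s, of N] C(1) unfolding A_def by (intro mult_left_mono) auto
      also have "exp (s / 16) = (\<Prod>i\<in>idx K M. exp ((u i)\<^sup>2 / 16))"
        unfolding s_def by (simp add: exp_sum[symmetric] sum_divide_distrib)
      finally show "norm (F u) \<le> norm (C * A * (\<Prod>i\<in>idx K M. exp ((u i)\<^sup>2 / 16)))"
        using A C(1) by (simp add: abs_mult prod_nonneg mult.assoc)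
    qed
  qed
qed


section \<open>Gaussian integration by parts in one coordinate\<close>

definition pdiff :: "int \<times> int \<Rightarrow> ((int \<times> int \<Rightarrow> real) \<Rightarrow> real) \<Rightarrow> (int \<times> int \<Rightarrow> real) \<Rightarrow> real" where
  "pdiff i h u = deriv (\<lambda>t. h (u(i := t))) (u i)"

lemma pd_eq_pdiff: "pd K M k j = pdiff (k mod K, j mod M)"
  by (auto simp: pd_def pdiff_def fun_eq_iff)

definition coord_C1 :: "int \<Rightarrow> int \<Rightarrow> int \<times> int \<Rightarrow> ((int \<times> int \<Rightarrow> real) \<Rightarrow> real) \<Rightarrow> bool" where
  "coord_C1 K M i h \<longleftrightarrow> moderate K M h
     \<and> (\<forall>u\<in>cfg K M. (\<lambda>t. h (u(i := t))) differentiable at (u i)) \<and> moderate K M (pdiff i h)"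

lemma fun_upd_in_cfg:
  assumes "i \<in> idx K M" and "x \<in> PiE (idx K M - {i}) (\<lambda>_. UNIV)"
  shows "x(i := y) \<in> cfg K M"
  using PiE_fun_upd[of y "\<lambda>_. UNIV" i x "idx K M - {i}"] assms
  unfolding cfg_def by (simp add: insert_absorb)

lemma moderate_slice:
  assumes "moderate K M h" and i: "i \<in> idx K M" and x: "x \<in> PiE (idx K M - {i}) (\<lambda>_. UNIV)"
  obtains D where "continuous_on UNIV (\<lambda>y. h (x(i := y)))"
    and "\<And>y. \<bar>h (x(i := y))\<bar> \<le> D * exp (y\<^sup>2 / 16)"
proof -
  have "continuous_on UNIV (\<lambda>y :: real. x(i := y))"
  proof (intro continuous_on_coordinatewise_then_product)
    fix j show "continuous_on UNIV (\<lambda>y :: real. (x(i := y)) j)"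
      by (cases "j = i") auto
  qed
  moreover have "continuous_on (cfg K M) h" using assms(1) unfolding moderate_def by simp
  ultimately have cont: "continuous_on UNIV (\<lambda>y. h (x(i := y)))"
    using continuous_on_compose2 fun_upd_in_cfg[OF i x] by blast
  have "poly_growth K M h" using assms(1) unfolding moderate_def by simp
  then obtain C N where C: "C \<ge> 0" "\<And>u. u \<in> cfg K M \<Longrightarrow> \<bar>h u\<bar> \<le> C * (1 + (\<Sum>i\<in>idx K M. (u i)\<^sup>2)) ^ N"
    by (rule poly_growthE) blast
  define s where "s = (\<Sum>j\<in>idx K M - {i}. (x j)\<^sup>2)"
  have s: "s \<ge> 0" unfolding s_def by (simp add: sum_nonneg)
  define A where "A = (16 * (real N + 1)) ^ N"
  have "\<bar>h (x(i := y))\<bar> \<le> C * A * exp (s / 16) * exp (y\<^sup>2 / 16)" for y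
  proof -
    have "(\<Sum>j\<in>idx K M. ((x(i := y)) j)\<^sup>2) = y\<^sup>2 + s"
      unfolding s_def by (simp add: sum.remove[OF finite_idx i])
    then have "\<bar>h (x(i := y))\<bar> \<le> C * (1 + (y\<^sup>2 + s)) ^ N"
      using C(2)[OF fun_upd_in_cfg[OF i x, of y]] by simp
    also have "\<dots> \<le> C * (A * exp ((y\<^sup>2 + s) / 16))"
      using one_plus_power_le_exp[of "y\<^sup>2 + s" N] s C(1) unfolding A_def by (intro mult_left_mono) auto
    also have "\<dots> = C * A * exp (s / 16) * exp (y\<^sup>2 / 16)"
      by (simp add: exp_add[symmetric] add_divide_distrib)
    finally show ?thesis .
  qed
  with cont show ?thesis by (rule that)
qed

lemma has_real_derivative_slice:
  assumes "coord_C1 K M i h" and "i \<in> idx K M" and "x \<in> PiE (idx K M - {i}) (\<lambda>_. UNIV)"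
  shows "((\<lambda>y. h (x(i := y))) has_real_derivative pdiff i h (x(i := y))) (at y)"
proof -
  have "(\<lambda>t. h ((x(i := y))(i := t))) differentiable at ((x(i := y)) i)"
    using assms(1) fun_upd_in_cfg[OF assms(2,3)] unfolding coord_C1_def by blast
  then show ?thesis
    unfolding pdiff_def by (simp add: DERIV_deriv_iff_real_differentiable[symmetric])
qed

lemma integral_gauss_slice_pdiff_mult:
  assumes i: "i \<in> idx K M" and h: "coord_C1 K M i h" and g: "coord_C1 K M i g"
    and x: "x \<in> PiE (idx K M - {i}) (\<lambda>_. UNIV)"
  shows "(\<integral>y. pdiff i h (x(i := y)) * g (x(i := y)) \<partial>gauss)
       = (\<integral>y. h (x(i := y)) * (y * g (x(i := y)) - pdiff i g (x(i := y))) \<partial>gauss)"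
proof -
  define H where "H y = h (x(i := y))" for y
  define G where "G y = g (x(i := y))" for y
  define H' where "H' y = pdiff i h (x(i := y))" for y
  define G' where "G' y = pdiff i g (x(i := y))" for y
  have "moderate K M h" "moderate K M (pdiff i h)" "moderate K M g" "moderate K M (pdiff i g)"
    using h g unfolding coord_C1_def by auto
  then obtain D1 D2 D3 D4
    where cH: "continuous_on UNIV H" and D1: "\<And>y. \<bar>H y\<bar> \<le> D1 * exp (y\<^sup>2 / 16)"
      and cH': "continuous_on UNIV H'" and D3: "\<And>y. \<bar>H' y\<bar> \<le> D3 * exp (y\<^sup>2 / 16)"
      and cG: "continuous_on UNIV G" and D2: "\<And>y. \<bar>G y\<bar> \<le> D2 * exp (y\<^sup>2 / 16)"
      and cG': "continuous_on UNIV G'" and D4: "\<And>y. \<bar>G' y\<bar> \<le> D4 * exp (y\<^sup>2 / 16)"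
    unfolding H_def G_def H'_def G'_def by (metis moderate_slice[OF _ i x])
  define D where "D = \<bar>D1\<bar> + \<bar>D2\<bar> + \<bar>D3\<bar> + \<bar>D4\<bar>"
  have enlarge: "\<bar>P y\<bar> \<le> D * exp (y\<^sup>2 / 16)"
    if "\<And>y. \<bar>P y\<bar> \<le> E * exp (y\<^sup>2 / 16)" and "\<bar>E\<bar> \<le> D" for P :: "real \<Rightarrow> real" and E y
  proof -
    have "E * exp (y\<^sup>2 / 16) \<le> D * exp (y\<^sup>2 / 16)"
      using that(2) by (intro mult_right_mono) auto
    then show ?thesis using that(1)[of y] by linarith
  qed
  have "(H has_real_derivative H' y) (at y)" "(G has_real_derivative G' y) (at y)" for y
    unfolding H_def[abs_def] H'_def G_def[abs_def] G'_def
    by (rule has_real_derivative_slice[OF h i x] has_real_derivative_slice[OF g i x])+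
  moreover have "\<bar>H y\<bar> \<le> D * exp (y\<^sup>2 / 16)" "\<bar>G y\<bar> \<le> D * exp (y\<^sup>2 / 16)"
    "\<bar>H' y\<bar> \<le> D * exp (y\<^sup>2 / 16)" "\<bar>G' y\<bar> \<le> D * exp (y\<^sup>2 / 16)" for y
    by (rule enlarge[OF D1] enlarge[OF D2] enlarge[OF D3] enlarge[OF D4]; simp add: D_def)+
  ultimately have "(\<integral>y. std_normal_density y * (H' y * G y) \<partial>lborel)
        = (\<integral>y. std_normal_density y * (H y * (y * G y - G' y)) \<partial>lborel)"
    using gauss_integration_by_parts_lborel(2-4)[of H H' G G' D] cH' cG' by (simp add: algebra_simps)
  moreover have "(\<lambda>y. H' y * G y) \<in> borel_measurable borel"
    and "(\<lambda>y. H y * (y * G y - G' y)) \<in> borel_measurable borel"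
    by (intro borel_measurable_continuous_onI continuous_intros cH cG cH' cG')+
  ultimately show ?thesis
    unfolding H_def G_def H'_def G'_def by (simp add: integral_density)
qed

text \<open>By Fubini, the integral over \<open>\<mu>\<close> is an iterated integral: first over the coordinate \<open>i\<close>,
  where the one-dimensional formula applies, then over the remaining ones.\<close>

lemma integral_pdiff_mult:
  assumes i: "i \<in> idx K M" and h: "coord_C1 K M i h" and g: "coord_C1 K M i g"
  shows "(\<integral>u. pdiff i h u * g u \<partial>mu K M) = (\<integral>u. h u * (u i * g u - pdiff i g u) \<partial>mu K M)"
proof -
  interpret product_sigma_finite "\<lambda>_ :: int \<times> int. gauss" by (rule product_sigma_finite_gauss)
  define I' where "I' = idx K M - {i}"
  have I': "finite I'" "i \<notin> I'" by (auto simp: I'_def)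
  have mu: "mu K M = PiM (insert i I') (\<lambda>_. gauss)"
    unfolding mu_def I'_def using i by (simp add: insert_absorb)
  have "moderate K M h" "moderate K M (pdiff i h)" "moderate K M g" "moderate K M (pdiff i g)"
    using h g unfolding coord_C1_def by auto
  then have "integrable (mu K M) (\<lambda>u. pdiff i h u * g u)"
    and "integrable (mu K M) (\<lambda>u. h u * (u i * g u - pdiff i g u))"
    by (auto intro!: integrable_moderate moderate_mult moderate_diff moderate_coordinate i)
  then have "(\<integral>u. pdiff i h u * g u \<partial>mu K M)
      = (\<integral>x. (\<integral>y. pdiff i h (x(i := y)) * g (x(i := y)) \<partial>gauss) \<partial>PiM I' (\<lambda>_. gauss))"
    and "(\<integral>u. h u * (u i * g u - pdiff i g u) \<partial>mu K M)
      = (\<integral>x. (\<integral>y. h (x(i := y)) * (y * g (x(i := y)) - pdiff i g (x(i := y))) \<partial>gauss) \<partial>PiM I' (\<lambda>_. gauss))"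
    using product_integral_insert[OF I', of "\<lambda>u. pdiff i h u * g u"]
      product_integral_insert[OF I', of "\<lambda>u. h u * (u i * g u - pdiff i g u)"] mu by simp_all
  moreover have "x \<in> space (PiM I' (\<lambda>_. gauss)) \<Longrightarrow> x \<in> PiE (idx K M - {i}) (\<lambda>_. UNIV)" for x
    by (simp add: space_PiM I'_def)
  ultimately show ?thesis
    using integral_gauss_slice_pdiff_mult[OF i h g]
    by (simp cong: Bochner_Integration.integral_cong)
qed

definition mean_zero :: "int \<Rightarrow> int \<Rightarrow> ((int \<times> int \<Rightarrow> real) \<Rightarrow> real) \<Rightarrow> bool" where
  "mean_zero K M F \<longleftrightarrow> has_bochner_integral (mu K M) F 0"

lemma mean_zero_add: "mean_zero K M F \<Longrightarrow> mean_zero K M G \<Longrightarrow> mean_zero K M (\<lambda>u. F u + G u)"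
  unfolding mean_zero_def using has_bochner_integral_add[of "mu K M" F 0 G 0] by simp

lemma mean_zero_diff: "mean_zero K M F \<Longrightarrow> mean_zero K M G \<Longrightarrow> mean_zero K M (\<lambda>u. F u - G u)"
  unfolding mean_zero_def using has_bochner_integral_diff[of "mu K M" F 0 G 0] by simp

lemma mean_zero_cmult: "mean_zero K M F \<Longrightarrow> mean_zero K M (\<lambda>u. c * F u)"
  unfolding mean_zero_def using has_bochner_integral_mult_right[of c "mu K M" F 0] by simp

lemma mean_zero_sum: "(\<And>a. a \<in> A \<Longrightarrow> mean_zero K M (F a)) \<Longrightarrow> mean_zero K M (\<lambda>u. \<Sum>a\<in>A. F a u)"
  unfolding mean_zero_def using has_bochner_integral_sum[of A "mu K M" F "\<lambda>_. 0"] by simp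

lemma mean_zero_cong:
  assumes "mean_zero K M F" and "\<And>u. u \<in> cfg K M \<Longrightarrow> F u = G u"
  shows "mean_zero K M G"
proof -
  have "has_bochner_integral (mu K M) F 0 \<longleftrightarrow> has_bochner_integral (mu K M) G 0"
    by (rule has_bochner_integral_cong) (simp_all add: assms(2) space_mu)
  then show ?thesis using assms(1) unfolding mean_zero_def by simp
qed

definition ibp_defect ::
  "int \<times> int \<Rightarrow> ((int \<times> int \<Rightarrow> real) \<Rightarrow> real) \<Rightarrow> ((int \<times> int \<Rightarrow> real) \<Rightarrow> real) \<Rightarrow> (int \<times> int \<Rightarrow> real) \<Rightarrow> real"
  where "ibp_defect i h g u = pdiff i h u * g u + h u * pdiff i g u - u i * h u * g u"

lemma mean_zero_ibp_defect:
  assumes i: "i \<in> idx K M" and h: "coord_C1 K M i h" and g: "coord_C1 K M i g"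
  shows "mean_zero K M (ibp_defect i h g)"
proof -
  have "moderate K M h" "moderate K M (pdiff i h)" "moderate K M g" "moderate K M (pdiff i g)"
    using h g unfolding coord_C1_def by auto
  then have i1: "integrable (mu K M) (\<lambda>u. pdiff i h u * g u)"
    and i2: "integrable (mu K M) (\<lambda>u. h u * pdiff i g u)"
    and i3: "integrable (mu K M) (\<lambda>u. u i * h u * g u)"
    by (auto intro!: integrable_moderate moderate_mult moderate_coordinate i)
  have "(\<integral>u. pdiff i h u * g u \<partial>mu K M) = (\<integral>u. u i * h u * g u - h u * pdiff i g u \<partial>mu K M)"
    unfolding integral_pdiff_mult[OF i h g] by (rule Bochner_Integration.integral_cong) (auto simp: algebra_simps)
  then show ?thesis
    unfolding mean_zero_def has_bochner_integral_iff ibp_defect_def[abs_def] using i1 i2 i3 by simp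
qed


section \<open>The drift is divergence free\<close>

lemma dvd_diff_residues_imp_eq:
  fixes l l' K :: int
  assumes "l \<in> {0..<K}" and "l' \<in> {0..<K}" and "K dvd (l - l')"
  shows "l = l'"
proof (rule ccontr)
  assume "l \<noteq> l'"
  then have "\<bar>K\<bar> \<le> \<bar>l - l'\<bar>" using assms(3) by (intro dvd_imp_le_int) auto
  then show False using assms(1,2) by auto
qed

lemma mod_diff_cancel_iff:
  fixes x l l' K :: int
  assumes "l \<in> {0..<K}" and "l' \<in> {0..<K}"
  shows "(x - l) mod K = (x - l') mod K \<longleftrightarrow> l = l'"
proof
  assume "(x - l) mod K = (x - l') mod K"
  then have "K dvd (l' - l)" by (simp add: mod_eq_dvd_iff)
  then show "l = l'" using dvd_diff_residues_imp_eq[OF assms(2,1)] by simp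
qed simp

lemma mod_diff_in_residues:
  fixes a b K :: int
  assumes "a \<in> {0..<K}" and "b \<in> {0..<K}" and "a \<noteq> b"
  shows "(a - b) mod K \<in> {1..<K}"
proof -
  have "(a - b) mod K \<noteq> 0"
    using mod_diff_cancel_iff[OF assms(2,1), of a] assms(3) by simp
  moreover have "0 \<le> (a - b) mod K" and "(a - b) mod K < K" using assms(1) by simp_all
  ultimately show ?thesis by simp
qed

lemma mod_add_eq_self_iff:
  fixes k d K :: int
  assumes "0 \<le> k" and "k < K"
  shows "(k + d) mod K = k \<longleftrightarrow> K dvd d"
proof -
  have "(k + d) mod K = k \<longleftrightarrow> (k + d) mod K = k mod K" using assms by simp
  also have "\<dots> \<longleftrightarrow> K dvd d" by (simp add: mod_eq_dvd_iff)
  finally show ?thesis .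
qed

lemma sum_periodic_shift:
  fixes F :: "int \<Rightarrow> 'a :: comm_monoid_add"
  assumes "M \<ge> 1" and "\<And>j. F (j + M) = F j"
  shows "(\<Sum>j\<in>{0..<M}. F (j + 1)) = (\<Sum>j\<in>{0..<M}. F j)"
proof -
  have "(\<Sum>j\<in>{0..<M}. F (j + 1)) = (\<Sum>j\<in>{1..<M + 1}. F j)"
    by (rule sum.reindex_bij_witness[of _ "\<lambda>j. j - 1" "\<lambda>j. j + 1"]) auto
  also have "\<dots> = (\<Sum>j\<in>insert M {1..<M}. F j)"
    using assms(1) by (intro sum.cong) auto
  also have "\<dots> = F M + (\<Sum>j\<in>{1..<M}. F j)" by simp
  also have "F M = F 0" using assms(2)[of 0] by simp
  also have "F 0 + (\<Sum>j\<in>{1..<M}. F j) = (\<Sum>j\<in>insert 0 {1..<M}. F j)" by simp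
  also have "\<dots> = (\<Sum>j\<in>{0..<M}. F j)" using assms(1) by (intro sum.cong) auto
  finally show ?thesis .
qed

lemma sum_periodic_telescope:
  fixes F :: "int \<Rightarrow> 'a :: ab_group_add"
  assumes "M \<ge> 1" and "\<And>j. F (j + M) = F j"
  shows "(\<Sum>j\<in>{0..<M}. F j - F (j + 1)) = 0"
  using sum_periodic_shift[of M F, OF assms] by (simp add: sum_subtractf)

lemma sum_shift_mod:
  fixes F :: "int \<Rightarrow> 'a :: comm_monoid_add"
  assumes "K \<ge> 1"
  shows "(\<Sum>k\<in>{0..<K}. F ((k + l) mod K)) = (\<Sum>k\<in>{0..<K}. F k)"
  by (rule sum.reindex_bij_witness[of _ "\<lambda>k. (k - l) mod K" "\<lambda>k. (k + l) mod K"])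
     (use assms in \<open>auto simp: mod_simps\<close>)

lemma sum_mult_sum_swap:
  fixes d :: "'b \<Rightarrow> real"
  shows "(\<Sum>j\<in>A. d j * (\<Sum>l\<in>B. c l * e l j)) = (\<Sum>l\<in>B. c l * (\<Sum>j\<in>A. d j * e l j))"
proof -
  have "(\<Sum>j\<in>A. d j * (\<Sum>l\<in>B. c l * e l j)) = (\<Sum>j\<in>A. \<Sum>l\<in>B. c l * (d j * e l j))"
    by (simp add: sum_distrib_left mult_ac)
  also have "\<dots> = (\<Sum>l\<in>B. \<Sum>j\<in>A. c l * (d j * e l j))" by (rule sum.swap)
  also have "\<dots> = (\<Sum>l\<in>B. c l * (\<Sum>j\<in>A. d j * e l j))" by (simp add: sum_distrib_left)
  finally show ?thesis .
qed

lemma sum_mult_sum_sum_swap: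
  fixes d :: "'b \<Rightarrow> real"
  shows "(\<Sum>j\<in>A. d j * (\<Sum>l\<in>B. \<Sum>l'\<in>C l. c l l' * e l l' j))
       = (\<Sum>l\<in>B. \<Sum>l'\<in>C l. c l l' * (\<Sum>j\<in>A. d j * e l l' j))"
proof -
  have "(\<Sum>j\<in>A. d j * (\<Sum>l\<in>B. \<Sum>l'\<in>C l. c l l' * e l l' j))
      = (\<Sum>j\<in>A. \<Sum>l\<in>B. d j * (\<Sum>l'\<in>C l. c l l' * e l l' j))"
    by (simp only: sum_distrib_left)
  also have "\<dots> = (\<Sum>l\<in>B. \<Sum>j\<in>A. d j * (\<Sum>l'\<in>C l. c l l' * e l l' j))" by (rule sum.swap)
  also have "\<dots> = (\<Sum>l\<in>B. \<Sum>l'\<in>C l. c l l' * (\<Sum>j\<in>A. d j * e l l' j))"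
    by (rule sum.cong[OF refl]) (rule sum_mult_sum_swap)
  finally show ?thesis .
qed

text \<open>Rotating the triples reindexes the sum, so three times the sum equals the sum of
  \<open>L\<^sub>a\<^sub>b\<^sub>c (S\<^sub>a\<^sub>b\<^sub>c + S\<^sub>b\<^sub>c\<^sub>a + S\<^sub>c\<^sub>a\<^sub>b)\<close>.\<close>

lemma sum_triples_eq_0_if_cyclic:
  fixes L S :: "'a \<Rightarrow> 'a \<Rightarrow> 'a \<Rightarrow> real"
  assumes rotate: "\<And>a b c. (a, b, c) \<in> A \<Longrightarrow> (b, c, a) \<in> A"
    and L: "\<And>a b c. (a, b, c) \<in> A \<Longrightarrow> L b c a = L a b c"
    and S: "\<And>a b c. (a, b, c) \<in> A \<Longrightarrow> S a b c + S b c a + S c a b = 0"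
  shows "(\<Sum>(a, b, c)\<in>A. L a b c * S a b c) = 0"
proof -
  have reindex: "(\<Sum>(a, b, c)\<in>A. F b c a) = (\<Sum>(a, b, c)\<in>A. F a b c)" for F :: "'a \<Rightarrow> 'a \<Rightarrow> 'a \<Rightarrow> real"
  proof (rule sum.reindex_bij_witness[of _ "\<lambda>(a, b, c). (c, a, b)" "\<lambda>(a, b, c). (b, c, a)"])
    fix t assume "t \<in> A"
    then obtain a b c where t: "t = (a, b, c)" and abc: "(a, b, c) \<in> A" by (cases t) auto
    show "(case (case t of (a, b, c) \<Rightarrow> (b, c, a)) of (a, b, c) \<Rightarrow> (c, a, b)) = t"
      and "(case (case t of (a, b, c) \<Rightarrow> (c, a, b)) of (a, b, c) \<Rightarrow> (b, c, a)) = t"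
      and "(case (case t of (a, b, c) \<Rightarrow> (b, c, a)) of (a, b, c) \<Rightarrow> F a b c) = (case t of (a, b, c) \<Rightarrow> F b c a)"
      by (simp_all add: t)
    show "(case t of (a, b, c) \<Rightarrow> (b, c, a)) \<in> A" using rotate[OF abc] by (simp add: t)
    show "(case t of (a, b, c) \<Rightarrow> (c, a, b)) \<in> A" using rotate[OF rotate[OF abc]] by (simp add: t)
  qed
  have invariant: "(\<Sum>(a, b, c)\<in>A. L b c a * F a b c) = (\<Sum>(a, b, c)\<in>A. L a b c * F a b c)"
    for F :: "'a \<Rightarrow> 'a \<Rightarrow> 'a \<Rightarrow> real"
  proof (rule sum.cong[OF refl])
    fix t assume "t \<in> A"
    then obtain a b c where t: "t = (a, b, c)" and abc: "(a, b, c) \<in> A" by (cases t) auto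
    show "(case t of (a, b, c) \<Rightarrow> L b c a * F a b c) = (case t of (a, b, c) \<Rightarrow> L a b c * F a b c)"
      using L[OF abc] by (simp add: t)
  qed
  define X Y W where "X = (\<Sum>(a, b, c)\<in>A. L a b c * S a b c)"
    and "Y = (\<Sum>(a, b, c)\<in>A. L a b c * S b c a)" and "W = (\<Sum>(a, b, c)\<in>A. L a b c * S c a b)"
  have "X = Y"
    unfolding X_def Y_def reindex[of "\<lambda>a b c. L a b c * S a b c", symmetric]
    by (rule invariant)
  moreover have "Y = W"
    unfolding Y_def W_def reindex[of "\<lambda>a b c. L a b c * S b c a", symmetric]
    by (rule invariant)
  moreover have "X + Y + W = (\<Sum>(a, b, c)\<in>A. L a b c * (S a b c + S b c a + S c a b))"
    unfolding X_def Y_def W_def by (simp add: distrib_left sum.distrib case_prod_unfold)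
  moreover have "\<dots> = 0" by (intro sum.neutral) (auto simp: S)
  ultimately show ?thesis unfolding X_def[symmetric] by simp
qed

lemma U_periodic: "U K M u a (b + M) = U K M u a b"
  by (simp add: U_def)

lemma G_fn_periodic: "G_fn K M \<alpha> \<beta> \<gamma> lam u k (j + M) = G_fn K M \<alpha> \<beta> \<gamma> lam u k j"
proof -
  have "U K M u a (j + M + 1) = U K M u a (j + 1)" for a
    using U_periodic[of K M u a "j + 1"] by (simp add: add.commute add.left_commute)
  then show ?thesis by (simp add: G_fn_def w_fn_def b_fn_def r_fn_def p_fn_def U_periodic)
qed

lemma sum_U_mul_B_by_parts:
  assumes "M \<ge> 1"
  shows "(\<Sum>j\<in>{0..<M}. U K M u k j * B_fn K M \<alpha> \<beta> \<gamma> lam u k j)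
       = (\<Sum>j\<in>{0..<M}. (U K M u k j - U K M u k (j + 1)) * G_fn K M \<alpha> \<beta> \<gamma> lam u k j)"
proof -
  define F where "F j = U K M u k j * G_fn K M \<alpha> \<beta> \<gamma> lam u k (j - 1)" for j
  have "F (j + M) = F j" for j
    using U_periodic G_fn_periodic[of K M \<alpha> \<beta> \<gamma> lam u k "j - 1"] by (simp add: F_def algebra_simps)
  then have "(\<Sum>j\<in>{0..<M}. F (j + 1)) = (\<Sum>j\<in>{0..<M}. F j)"
    by (rule sum_periodic_shift[OF assms])
  then show ?thesis
    unfolding F_def B_fn_def by (simp add: algebra_simps sum_subtractf)
qed

lemma sum_diff_mul_w:
  assumes "M \<ge> 1"
  shows "(\<Sum>j\<in>{0..<M}. (U K M u k j - U K M u k (j + 1)) * (a * w_fn K M u k j)) = 0"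
proof -
  define F where "F j = a / 3 * U K M u k j ^ 3" for j
  have "(\<Sum>j\<in>{0..<M}. (U K M u k j - U K M u k (j + 1)) * (a * w_fn K M u k j))
      = (\<Sum>j\<in>{0..<M}. F j - F (j + 1))"
    unfolding F_def w_fn_def by (intro sum.cong) (auto simp: power2_eq_square power3_eq_cube field_simps)
  also have "\<dots> = 0" by (rule sum_periodic_telescope[OF assms]) (simp add: F_def U_periodic)
  finally show ?thesis .
qed

definition cross_term :: "int \<Rightarrow> int \<Rightarrow> (int \<times> int \<Rightarrow> real) \<Rightarrow> int \<Rightarrow> int \<Rightarrow> real" where
  "cross_term K M u a c = (\<Sum>j\<in>{0..<M}. U K M u a j * U K M u a (j + 1) * (U K M u c (j + 1) - U K M u c j))"

lemma cross_term_mod: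
  "a mod K = a' mod K \<Longrightarrow> c mod K = c' mod K \<Longrightarrow> cross_term K M u a c = cross_term K M u a' c'"
  unfolding cross_term_def by (simp add: U_def)

lemma sum_diff_mul_b:
  assumes "M \<ge> 1"
  shows "(\<Sum>j\<in>{0..<M}. (U K M u k j - U K M u k (j + 1)) * b_fn K M u l k j) = cross_term K M u k (k + l) / 2"
proof -
  define F where "F j = U K M u k j ^ 2 * U K M u (k + l) j / 2" for j
  have "(\<Sum>j\<in>{0..<M}. (U K M u k j - U K M u k (j + 1)) * b_fn K M u l k j)
      = (\<Sum>j\<in>{0..<M}. (F j - F (j + 1))
           + U K M u k j * U K M u k (j + 1) * (U K M u (k + l) (j + 1) - U K M u (k + l) j) / 2)"
    unfolding F_def b_fn_def by (intro sum.cong) (auto simp: power2_eq_square field_simps)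
  also have "\<dots> = (\<Sum>j\<in>{0..<M}. F j - F (j + 1)) + cross_term K M u k (k + l) / 2"
    unfolding cross_term_def by (simp add: sum.distrib sum_divide_distrib)
  also have "(\<Sum>j\<in>{0..<M}. F j - F (j + 1)) = 0"
    by (rule sum_periodic_telescope[OF assms]) (simp add: F_def U_periodic)
  finally show ?thesis by simp
qed

lemma sum_diff_mul_r:
  "(\<Sum>j\<in>{0..<M}. (U K M u k j - U K M u k (j + 1)) * r_fn K M u l k j) = - cross_term K M u (k - l) k"
  unfolding cross_term_def r_fn_def by (simp add: sum_negf[symmetric] algebra_simps)

definition triple_term :: "int \<Rightarrow> int \<Rightarrow> (int \<times> int \<Rightarrow> real) \<Rightarrow> int \<Rightarrow> int \<Rightarrow> int \<Rightarrow> real" where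
  "triple_term K M u c a b = (\<Sum>j\<in>{0..<M}. (U K M u c j - U K M u c (j + 1)) * p_fn K M u (c - a) (c - b) c j)"

lemma triple_term_mod:
  "c mod K = c' mod K \<Longrightarrow> a mod K = a' mod K \<Longrightarrow> b mod K = b' mod K \<Longrightarrow>
   triple_term K M u c a b = triple_term K M u c' a' b'"
  unfolding triple_term_def p_fn_def by (simp add: U_def)

text \<open>The telescoping quantity is \<open>u\<^sub>a\<^sub>,\<^sub>j u\<^sub>b\<^sub>,\<^sub>j u\<^sub>c\<^sub>,\<^sub>j\<close>; the weights of \<open>p\<close> are exactly those that
  make the three cyclic terms add up to its increment.\<close>

lemma triple_term_cyclic:
  assumes "M \<ge> 1"
  shows "triple_term K M u c a b + triple_term K M u a b c + triple_term K M u b c a = 0"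
proof -
  define T where "T j = U K M u a j * U K M u b j * U K M u c j" for j
  have "triple_term K M u c a b + triple_term K M u a b c + triple_term K M u b c a
      = (\<Sum>j\<in>{0..<M}. T j - T (j + 1))"
    unfolding triple_term_def sum.distrib[symmetric]
    by (intro sum.cong) (auto simp: T_def p_fn_def field_simps)
  also have "\<dots> = 0" by (rule sum_periodic_telescope[OF assms]) (simp add: T_def U_periodic)
  finally show ?thesis .
qed

lemma sum_diff_mul_G:
  assumes M: "M \<ge> 1" and k: "0 \<le> k" "k < K"
  shows "(\<Sum>j\<in>{0..<M}. (U K M u k j - U K M u k (j + 1)) * G_fn K M \<alpha> \<beta> \<gamma> lam u k j)
    = (\<Sum>l\<in>{1..<K}. \<beta> k l * (cross_term K M u k (k + l) / 2))
      - (\<Sum>l\<in>{1..<K}. \<gamma> k l * cross_term K M u (k - l) k)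
      + (\<Sum>l\<in>{1..<K}. \<Sum>l'\<in>{1..<K} - {l}.
           lam k ((k - l) mod K) ((k - l') mod K) * triple_term K M u k (k - l) (k - l'))"
proof -
  define d where "d j = U K M u k j - U K M u k (j + 1)" for j
  have "(\<Sum>j\<in>{0..<M}. d j * G_fn K M \<alpha> \<beta> \<gamma> lam u k j)
     = (\<Sum>j\<in>{0..<M}. d j * (\<alpha> k * w_fn K M u k j))
       + (\<Sum>j\<in>{0..<M}. d j * (\<Sum>l\<in>{1..<K}. \<beta> k l * b_fn K M u l k j))
       + (\<Sum>j\<in>{0..<M}. d j * (\<Sum>l\<in>{1..<K}. \<gamma> k l * r_fn K M u l k j))
       + (\<Sum>j\<in>{0..<M}. d j * (\<Sum>l\<in>{1..<K}. \<Sum>l'\<in>{1..<K} - {l}.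
            lam k ((k - l) mod K) ((k - l') mod K) * p_fn K M u l l' k j))"
    using k unfolding G_fn_def by (simp add: distrib_left sum.distrib)
  also have "(\<Sum>j\<in>{0..<M}. d j * (\<alpha> k * w_fn K M u k j)) = 0"
    unfolding d_def by (rule sum_diff_mul_w[OF M])
  also have "(\<Sum>j\<in>{0..<M}. d j * (\<Sum>l\<in>{1..<K}. \<beta> k l * b_fn K M u l k j))
      = (\<Sum>l\<in>{1..<K}. \<beta> k l * (cross_term K M u k (k + l) / 2))"
    by (subst sum_mult_sum_swap) (simp add: d_def sum_diff_mul_b[OF M])
  also have "(\<Sum>j\<in>{0..<M}. d j * (\<Sum>l\<in>{1..<K}. \<gamma> k l * r_fn K M u l k j))
      = - (\<Sum>l\<in>{1..<K}. \<gamma> k l * cross_term K M u (k - l) k)"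
    by (subst sum_mult_sum_swap) (simp add: d_def sum_diff_mul_r sum_negf)
  also have "(\<Sum>j\<in>{0..<M}. d j * (\<Sum>l\<in>{1..<K}. \<Sum>l'\<in>{1..<K} - {l}.
            lam k ((k - l) mod K) ((k - l') mod K) * p_fn K M u l l' k j))
      = (\<Sum>l\<in>{1..<K}. \<Sum>l'\<in>{1..<K} - {l}.
           lam k ((k - l) mod K) ((k - l') mod K) * triple_term K M u k (k - l) (k - l'))"
    by (subst sum_mult_sum_sum_swap) (simp add: d_def triple_term_def)
  finally show ?thesis unfolding d_def by simp
qed

lemma sum_beta_eq_sum_gamma:
  assumes K: "K \<ge> 1" and C1: "cond_C1 K \<beta> \<gamma>"
  shows "(\<Sum>k\<in>{0..<K}. \<Sum>l\<in>{1..<K}. \<beta> k l * (cross_term K M u k (k + l) / 2))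
       = (\<Sum>k\<in>{0..<K}. \<Sum>l\<in>{1..<K}. \<gamma> k l * cross_term K M u (k - l) k)"
proof -
  have shift: "(\<Sum>k\<in>{0..<K}. \<gamma> ((k + l) mod K) l * cross_term K M u k (k + l))
      = (\<Sum>k\<in>{0..<K}. \<gamma> k l * cross_term K M u (k - l) k)" for l
  proof -
    have "cross_term K M u k (k + l) = cross_term K M u ((k + l) mod K - l) ((k + l) mod K)" for k
      by (rule cross_term_mod) (simp_all add: mod_diff_left_eq)
    then have "(\<Sum>k\<in>{0..<K}. \<gamma> ((k + l) mod K) l * cross_term K M u k (k + l))
        = (\<Sum>k\<in>{0..<K}. (\<lambda>k'. \<gamma> k' l * cross_term K M u (k' - l) k') ((k + l) mod K))"
      by simp
    also have "\<dots> = (\<Sum>k\<in>{0..<K}. \<gamma> k l * cross_term K M u (k - l) k)"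
      by (rule sum_shift_mod[OF K])
    finally show ?thesis .
  qed
  have "(\<Sum>k\<in>{0..<K}. \<Sum>l\<in>{1..<K}. \<beta> k l * (cross_term K M u k (k + l) / 2))
      = (\<Sum>l\<in>{1..<K}. \<Sum>k\<in>{0..<K}. \<gamma> ((k + l) mod K) l * cross_term K M u k (k + l))"
    using C1 unfolding cond_C1_def by (subst sum.swap) simp
  also have "\<dots> = (\<Sum>k\<in>{0..<K}. \<Sum>l\<in>{1..<K}. \<gamma> k l * cross_term K M u (k - l) k)"
    unfolding shift by (rule sum.swap)
  finally show ?thesis .
qed

definition distinct_triples :: "int \<Rightarrow> (int \<times> int \<times> int) set" where
  "distinct_triples K = {(a, b, c). a \<in> {0..<K} \<and> b \<in> {0..<K} \<and> c \<in> {0..<K} \<and> a \<noteq> b \<and> b \<noteq> c \<and> a \<noteq> c}"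

lemma sum_offsets_eq_sum_distinct_triples:
  "(\<Sum>k\<in>{0..<K}. \<Sum>l\<in>{1..<K}. \<Sum>l'\<in>{1..<K} - {l}. F k ((k - l) mod K) ((k - l') mod K))
   = (\<Sum>(a, b, c)\<in>distinct_triples K. F a b c)"
proof -
  have "(\<Sum>k\<in>{0..<K}. \<Sum>l\<in>{1..<K}. \<Sum>l'\<in>{1..<K} - {l}. F k ((k - l) mod K) ((k - l') mod K))
      = (\<Sum>(k, l, l')\<in>Sigma {0..<K} (\<lambda>k. Sigma {1..<K} (\<lambda>l. {1..<K} - {l})).
           F k ((k - l) mod K) ((k - l') mod K))"
    by (simp add: sum.Sigma case_prod_unfold)
  also have "\<dots> = (\<Sum>(a, b, c)\<in>distinct_triples K. F a b c)"
  proof (rule sum.reindex_bij_witness[of _ "\<lambda>(a, b, c). (a, (a - b) mod K, (a - c) mod K)"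
                                         "\<lambda>(k, l, l'). (k, (k - l) mod K, (k - l') mod K)"])
    fix t assume "t \<in> distinct_triples K"
    then obtain a b c where t: "t = (a, b, c)" and a: "a \<in> {0..<K}" and b: "b \<in> {0..<K}"
      and c: "c \<in> {0..<K}" and ne: "a \<noteq> b" "b \<noteq> c" "a \<noteq> c"
      by (auto simp: distinct_triples_def)
    have "(a - b) mod K \<in> {1..<K}" "(a - c) mod K \<in> {1..<K}" "(a - b) mod K \<noteq> (a - c) mod K"
      using mod_diff_in_residues[OF a b ne(1)] mod_diff_in_residues[OF a c ne(3)]
        mod_diff_cancel_iff[OF b c, of a] ne(2) by simp_all
    then show "(case t of (a, b, c) \<Rightarrow> (a, (a - b) mod K, (a - c) mod K))
             \<in> Sigma {0..<K} (\<lambda>k. Sigma {1..<K} (\<lambda>l. {1..<K} - {l}))"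
      using a by (simp add: t)
    show "(case (case t of (a, b, c) \<Rightarrow> (a, (a - b) mod K, (a - c) mod K)) of
             (k, l, l') \<Rightarrow> (k, (k - l) mod K, (k - l') mod K)) = t"
      using b c by (simp add: t mod_diff_right_eq)
  next
    fix t assume "t \<in> Sigma {0..<K} (\<lambda>k. Sigma {1..<K} (\<lambda>l. {1..<K} - {l}))"
    then obtain k l l' where t: "t = (k, l, l')" and k: "k \<in> {0..<K}" and l: "l \<in> {0..<K}" "l \<noteq> 0"
      and l': "l' \<in> {0..<K}" "l' \<noteq> 0" and ne: "l \<noteq> l'"
      by force
    have z: "0 \<in> {0..<K}" and km: "k mod K = k" using k by simp_all
    have "(k - l) mod K \<noteq> k" "(k - l') mod K \<noteq> k" "(k - l) mod K \<noteq> (k - l') mod K"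
      using mod_diff_cancel_iff[where x = k, OF l(1) z] mod_diff_cancel_iff[where x = k, OF l'(1) z]
        mod_diff_cancel_iff[where x = k, OF l(1) l'(1)] l(2) l'(2) ne km by simp_all
    moreover have "(k - l) mod K \<in> {0..<K}" "(k - l') mod K \<in> {0..<K}" using k by simp_all
    ultimately show "(case t of (k, l, l') \<Rightarrow> (k, (k - l) mod K, (k - l') mod K)) \<in> distinct_triples K"
      using k unfolding distinct_triples_def t by (simp add: eq_commute[of k])
    show "(case (case t of (k, l, l') \<Rightarrow> (k, (k - l) mod K, (k - l') mod K)) of
             (a, b, c) \<Rightarrow> (a, (a - b) mod K, (a - c) mod K)) = t"
      using l l' by (simp add: t mod_diff_right_eq)
  qed (simp split: prod.split)
  finally show ?thesis .
qed

lemma cond_C2_residues: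
  assumes C2: "cond_C2 K lam" and "(a, b, c) \<in> distinct_triples K"
  shows "lam a b c = lam a c b" and "lam a c b = lam b a c"
proof -
  have a: "a \<in> {0..<K}" and b: "b \<in> {0..<K}" and c: "c \<in> {0..<K}" and ne: "a \<noteq> b" "b \<noteq> c" "a \<noteq> c"
    using assms(2) by (auto simp: distinct_triples_def)
  define l l' where "l = (a - b) mod K" and "l' = (a - c) mod K"
  have "l \<in> {1..<K}" "l' \<in> {1..<K}" "l \<noteq> l'"
    unfolding l_def l'_def using mod_diff_in_residues[OF a b] mod_diff_in_residues[OF a c]
      mod_diff_cancel_iff[OF b c] ne by auto
  then have "lam a ((a - l) mod K) ((a - l') mod K) = lam a ((a - l') mod K) ((a - l) mod K)
      \<and> lam a ((a - l') mod K) ((a - l) mod K) = lam ((a - l) mod K) a ((a - l') mod K)"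
    using C2 a unfolding cond_C2_def by blast
  moreover have "(a - l) mod K = b" "(a - l') mod K = c"
    unfolding l_def l'_def using b c by (simp_all add: mod_diff_right_eq)
  ultimately show "lam a b c = lam a c b" and "lam a c b = lam b a c" by simp_all
qed

lemma cond_C2_rotate:
  assumes C2: "cond_C2 K lam" and abc: "(a, b, c) \<in> distinct_triples K"
  shows "lam b c a = lam a b c"
proof -
  have "(b, c, a) \<in> distinct_triples K" using abc by (auto simp: distinct_triples_def)
  then have "lam b c a = lam b a c" by (rule cond_C2_residues(1)[OF C2])
  also have "\<dots> = lam a c b" using cond_C2_residues(2)[OF C2 abc] by simp
  also have "\<dots> = lam a b c" using cond_C2_residues(1)[OF C2 abc] by simp
  finally show ?thesis .
qed

lemma sum_lam_triple_term_eq_0: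
  assumes "M \<ge> 1" and C2: "cond_C2 K lam"
  shows "(\<Sum>k\<in>{0..<K}. \<Sum>l\<in>{1..<K}. \<Sum>l'\<in>{1..<K} - {l}.
            lam k ((k - l) mod K) ((k - l') mod K) * triple_term K M u k (k - l) (k - l')) = 0"
proof -
  have "triple_term K M u k (k - l) (k - l') = triple_term K M u k ((k - l) mod K) ((k - l') mod K)"
    for k l l' by (rule triple_term_mod) simp_all
  then have "(\<Sum>k\<in>{0..<K}. \<Sum>l\<in>{1..<K}. \<Sum>l'\<in>{1..<K} - {l}.
            lam k ((k - l) mod K) ((k - l') mod K) * triple_term K M u k (k - l) (k - l'))
      = (\<Sum>(a, b, c)\<in>distinct_triples K. lam a b c * triple_term K M u a b c)"
    using sum_offsets_eq_sum_distinct_triples[of "\<lambda>a b c. lam a b c * triple_term K M u a b c"]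
    by simp
  also have "\<dots> = 0"
  proof (rule sum_triples_eq_0_if_cyclic)
    fix a b c assume abc: "(a, b, c) \<in> distinct_triples K"
    then show "(b, c, a) \<in> distinct_triples K" by (auto simp: distinct_triples_def)
    show "lam b c a = lam a b c" using cond_C2_rotate[OF C2 abc] .
    show "triple_term K M u a b c + triple_term K M u b c a + triple_term K M u c a b = 0"
      by (rule triple_term_cyclic[OF assms(1)])
  qed
  finally show ?thesis .
qed

lemma sum_U_mul_B_eq_0:
  assumes K: "K \<ge> 1" and M: "M \<ge> 1" and C1: "cond_C1 K \<beta> \<gamma>" and C2: "cond_C2 K lam"
  shows "(\<Sum>k\<in>{0..<K}. \<Sum>j\<in>{0..<M}. U K M u k j * B_fn K M \<alpha> \<beta> \<gamma> lam u k j) = 0"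
proof -
  have "(\<Sum>k\<in>{0..<K}. \<Sum>j\<in>{0..<M}. U K M u k j * B_fn K M \<alpha> \<beta> \<gamma> lam u k j)
     = (\<Sum>k\<in>{0..<K}. (\<Sum>l\<in>{1..<K}. \<beta> k l * (cross_term K M u k (k + l) / 2))
         - (\<Sum>l\<in>{1..<K}. \<gamma> k l * cross_term K M u (k - l) k)
         + (\<Sum>l\<in>{1..<K}. \<Sum>l'\<in>{1..<K} - {l}.
              lam k ((k - l) mod K) ((k - l') mod K) * triple_term K M u k (k - l) (k - l')))"
    by (intro sum.cong refl) (simp add: sum_U_mul_B_by_parts[OF M] sum_diff_mul_G[OF M])
  also have "\<dots> = 0"
    using sum_beta_eq_sum_gamma[OF K C1, of M u] sum_lam_triple_term_eq_0[OF M C2, of u]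
    by (simp add: sum.distrib sum_subtractf)
  finally show ?thesis .
qed

text \<open>This is \<open>\<partial>\<^sub>k\<^sub>,\<^sub>j B\<^sub>k\<^sub>,\<^sub>j\<close>: the \<open>\<beta>\<close>-contributions of \<open>G\<^sub>k\<^sub>,\<^sub>j\<close> and \<open>G\<^sub>k\<^sub>,\<^sub>j\<^sub>-\<^sub>1\<close> cancel, and the
  \<open>\<gamma>\<close>- and \<open>\<lambda>\<close>-terms do not involve component \<open>k\<close>.\<close>

definition drift_slope :: "int \<Rightarrow> int \<Rightarrow> (int \<Rightarrow> real) \<Rightarrow> (int \<times> int \<Rightarrow> real) \<Rightarrow> int \<Rightarrow> int \<Rightarrow> real" where
  "drift_slope K M \<alpha> u k j = \<alpha> (k mod K) / 3 * (U K M u k (j + 1) - U K M u k (j - 1))"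

lemma sum_drift_slope_eq_0:
  assumes "M \<ge> 1"
  shows "(\<Sum>j\<in>{0..<M}. drift_slope K M \<alpha> u k j) = 0"
proof -
  have "(\<Sum>j\<in>{0..<M}. U K M u k (j + 1)) = (\<Sum>j\<in>{0..<M}. U K M u k j)"
    by (rule sum_periodic_shift[OF assms]) (simp add: U_periodic)
  moreover have "(\<Sum>j\<in>{0..<M}. U K M u k (j + 1 - 1)) = (\<Sum>j\<in>{0..<M}. U K M u k (j - 1))"
    by (rule sum_periodic_shift[OF assms]) (metis U_periodic add_diff_eq diff_add_eq)
  moreover have "(\<Sum>j\<in>{0..<M}. drift_slope K M \<alpha> u k j)
      = \<alpha> (k mod K) / 3 * ((\<Sum>j\<in>{0..<M}. U K M u k (j + 1)) - (\<Sum>j\<in>{0..<M}. U K M u k (j - 1)))"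
    unfolding drift_slope_def sum_distrib_left[symmetric] sum_subtractf ..
  ultimately show ?thesis by simp
qed

theorem drift_divergence_free:
  assumes "K \<ge> 1" and "M \<ge> 1" and "cond_C1 K \<beta> \<gamma>" and "cond_C2 K lam"
  shows "(\<Sum>k\<in>{0..<K}. \<Sum>j\<in>{0..<M}. U K M u k j * B_fn K M \<alpha> \<beta> \<gamma> lam u k j - drift_slope K M \<alpha> u k j) = 0"
  using sum_U_mul_B_eq_0[OF assms, of u \<alpha>] sum_drift_slope_eq_0[OF assms(2)]
  by (simp add: sum_subtractf)


section \<open>Regularity of the drift\<close>

lemma U_fun_upd: "U K M (u(i := t)) a b = (if (a mod K, b mod M) = i then t else U K M u a b)"
  by (simp add: U_def)

lemma not_dvd_residue:
  fixes l K :: int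
  assumes "l \<in> {1..<K}"
  shows "\<not> K dvd l"
  using dvd_diff_residues_imp_eq[of l K 0] assms by auto

text \<open>For \<open>M \<ge> 2\<close> the sites \<open>(k, j \<plusminus> 1)\<close> and \<open>(k \<plusminus> l, \<cdot>)\<close> all differ from \<open>(k, j)\<close>, so only the
  \<open>u\<^sub>k\<^sub>,\<^sub>j\<close>-occurrences in \<open>w\<close> and \<open>b\<close> see an update of \<open>u\<^sub>k\<^sub>,\<^sub>j\<close>.\<close>

context
  fixes K M k j :: int and u :: "int \<times> int \<Rightarrow> real" and t :: real
  assumes M: "M \<ge> 2" and k: "0 \<le> k" "k < K" and j: "0 \<le> j" "j < M"
begin

private lemma site_mod: "k mod K = k" "j mod M = j"
  using k j by simp_all

private lemma neighbours_neq: "(k, (j + 1) mod M) \<noteq> (k, j)" "(k, (j - 1) mod M) \<noteq> (k, j)"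
proof -
  have "\<not> M dvd 1" "\<not> M dvd - 1" using M by auto
  then show "(k, (j + 1) mod M) \<noteq> (k, j)" "(k, (j - 1) mod M) \<noteq> (k, j)"
    using mod_add_eq_self_iff[OF j, of 1] mod_add_eq_self_iff[OF j, of "- 1"] by auto
qed

private lemma other_component_neq:
  assumes "l \<in> {1..<K}"
  shows "(k + l) mod K \<noteq> k" and "(k - l) mod K \<noteq> k"
  using mod_add_eq_self_iff[OF k, of l] mod_add_eq_self_iff[OF k, of "- l"] not_dvd_residue[OF assms]
  by auto

lemma w_fn_fun_upd:
  "w_fn K M (u((k, j) := t)) k j = w_fn K M u k j + (t - U K M u k j) * (t + U K M u k j + U K M u k (j + 1)) / 3"
  "w_fn K M (u((k, j) := t)) k (j - 1)
     = w_fn K M u k (j - 1) + (t - U K M u k j) * (t + U K M u k j + U K M u k (j - 1)) / 3"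
  unfolding w_fn_def U_fun_upd using neighbours_neq
  by (simp_all add: site_mod field_simps power2_eq_square)

lemma b_fn_fun_upd:
  assumes "l \<in> {1..<K}"
  shows "b_fn K M (u((k, j) := t)) l k j = b_fn K M u l k j + (t - U K M u k j) * U K M u (k + l) j / 2"
    and "b_fn K M (u((k, j) := t)) l k (j - 1) = b_fn K M u l k (j - 1) + (t - U K M u k j) * U K M u (k + l) j / 2"
  unfolding b_fn_def U_fun_upd using neighbours_neq other_component_neq[OF assms]
  by (simp_all add: site_mod field_simps)

lemma r_fn_fun_upd: "l \<in> {1..<K} \<Longrightarrow> r_fn K M (u((k, j) := t)) l k j' = r_fn K M u l k j'"
  unfolding r_fn_def U_fun_upd using other_component_neq by simp

lemma p_fn_fun_upd:
  "l \<in> {1..<K} \<Longrightarrow> l' \<in> {1..<K} \<Longrightarrow> p_fn K M (u((k, j) := t)) l l' k j' = p_fn K M u l l' k j'"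
  unfolding p_fn_def U_fun_upd using other_component_neq by simp

lemma G_fn_fun_upd:
  assumes "j' = j \<or> j' = j - 1"
  shows "G_fn K M \<alpha> \<beta> \<gamma> lam (u((k, j) := t)) k j' = G_fn K M \<alpha> \<beta> \<gamma> lam u k j'
     + \<alpha> k * (w_fn K M (u((k, j) := t)) k j' - w_fn K M u k j')
     + (\<Sum>l\<in>{1..<K}. \<beta> k l * ((t - U K M u k j) * U K M u (k + l) j / 2))"
proof -
  have b: "(\<Sum>l\<in>{1..<K}. \<beta> k l * b_fn K M (u((k, j) := t)) l k j')
      = (\<Sum>l\<in>{1..<K}. \<beta> k l * b_fn K M u l k j')
        + (\<Sum>l\<in>{1..<K}. \<beta> k l * ((t - U K M u k j) * U K M u (k + l) j / 2))"
    using assms by (auto simp: b_fn_fun_upd distrib_left sum.distrib)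
  have r: "(\<Sum>l\<in>{1..<K}. \<gamma> k l * r_fn K M (u((k, j) := t)) l k j')
      = (\<Sum>l\<in>{1..<K}. \<gamma> k l * r_fn K M u l k j')"
    by (simp add: r_fn_fun_upd)
  have p: "(\<Sum>l\<in>{1..<K}. \<Sum>l'\<in>{1..<K} - {l}.
        lam k ((k - l) mod K) ((k - l') mod K) * p_fn K M (u((k, j) := t)) l l' k j')
      = (\<Sum>l\<in>{1..<K}. \<Sum>l'\<in>{1..<K} - {l}. lam k ((k - l) mod K) ((k - l') mod K) * p_fn K M u l l' k j')"
    by (intro sum.cong refl) (simp add: p_fn_fun_upd)
  show ?thesis unfolding G_fn_def site_mod b r p by (simp add: algebra_simps)
qed

lemma B_fn_fun_upd_of_two_le:
  "B_fn K M \<alpha> \<beta> \<gamma> lam (u((k, j) := t)) k j = B_fn K M \<alpha> \<beta> \<gamma> lam u k j + (t - u (k, j)) * drift_slope K M \<alpha> u k j"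
proof -
  have "U K M u k j = u (k, j)" by (simp add: U_def site_mod)
  then show ?thesis
    unfolding B_fn_def G_fn_fun_upd[OF disjI1[OF refl]] G_fn_fun_upd[OF disjI2[OF refl]] w_fn_fun_upd
      drift_slope_def site_mod
    by (simp add: field_simps)
qed

end

text \<open>For \<open>M = 1\<close> both \<open>B\<^sub>k\<^sub>,\<^sub>j\<close> and its slope vanish, since then \<open>G\<^sub>k\<^sub>,\<^sub>j\<close> does not depend on \<open>j\<close>.\<close>

lemma B_fn_fun_upd:
  assumes "M \<ge> 1" and "0 \<le> k" "k < K" and "0 \<le> j" "j < M"
  shows "B_fn K M \<alpha> \<beta> \<gamma> lam (u((k, j) := t)) k j
       = B_fn K M \<alpha> \<beta> \<gamma> lam u k j + (t - u (k, j)) * drift_slope K M \<alpha> u k j"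
proof (cases "M = 1")
  case True
  then show ?thesis by (simp add: B_fn_def G_fn_def w_fn_def b_fn_def r_fn_def p_fn_def drift_slope_def U_def)
next
  case False
  then show ?thesis using B_fn_fun_upd_of_two_le assms by simp
qed

context
  fixes K M :: int
  assumes K: "K \<ge> 1" and M: "M \<ge> 1"
begin

lemma moderate_U: "moderate K M (\<lambda>u. U K M u a b)"
proof -
  have "(a mod K, b mod M) \<in> idx K M" using K M by (simp add: idx_def)
  then show ?thesis unfolding U_def by (rule moderate_coordinate)
qed

lemmas moderate_intros = moderate_add moderate_diff moderate_mult moderate_const moderate_U

lemma moderate_B_fn: "moderate K M (\<lambda>u. B_fn K M \<alpha> \<beta> \<gamma> lam u k j)"
proof -
  have G: "moderate K M (\<lambda>u. G_fn K M \<alpha> \<beta> \<gamma> lam u k j)" for j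
    unfolding G_fn_def w_fn_def b_fn_def r_fn_def p_fn_def power2_eq_square
    by (intro moderate_intros moderate_sum) auto
  show ?thesis unfolding B_fn_def by (intro moderate_diff G)
qed

lemma moderate_drift_slope: "moderate K M (\<lambda>u. drift_slope K M \<alpha> u k j)"
  unfolding drift_slope_def by (intro moderate_intros)

lemma coord_C1_B_fn_mult:
  assumes kj: "(k, j) \<in> idx K M" and g: "coord_C1 K M (k, j) g"
  shows "coord_C1 K M (k, j) (\<lambda>u. B_fn K M \<alpha> \<beta> \<gamma> lam u k j * g u)"
    and "\<And>u. u \<in> cfg K M \<Longrightarrow> pdiff (k, j) (\<lambda>u. B_fn K M \<alpha> \<beta> \<gamma> lam u k j * g u) u
          = drift_slope K M \<alpha> u k j * g u + B_fn K M \<alpha> \<beta> \<gamma> lam u k j * pdiff (k, j) g u"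
proof -
  let ?B = "\<lambda>u. B_fn K M \<alpha> \<beta> \<gamma> lam u k j"
  have has_deriv: "((\<lambda>t. ?B (u((k, j) := t)) * g (u((k, j) := t))) has_real_derivative
           drift_slope K M \<alpha> u k j * g u + ?B u * pdiff (k, j) g u) (at (u (k, j)))"
    if u: "u \<in> cfg K M" for u
  proof -
    have "((\<lambda>t. ?B u + (t - u (k, j)) * drift_slope K M \<alpha> u k j) has_real_derivative
        drift_slope K M \<alpha> u k j) (at (u (k, j)))"
      by (auto intro!: derivative_eq_intros)
    then have dB: "((\<lambda>t. ?B (u((k, j) := t))) has_real_derivative drift_slope K M \<alpha> u k j) (at (u (k, j)))"
      using kj M by (simp add: B_fn_fun_upd idx_def)
    have dg: "((\<lambda>t. g (u((k, j) := t))) has_real_derivative pdiff (k, j) g u) (at (u (k, j)))"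
      using g u unfolding coord_C1_def pdiff_def by (simp add: DERIV_deriv_iff_real_differentiable)
    show ?thesis using DERIV_mult[OF dB dg] by (simp add: mult.commute)
  qed
  show pdiff_eq: "pdiff (k, j) (\<lambda>u. ?B u * g u) u = drift_slope K M \<alpha> u k j * g u + ?B u * pdiff (k, j) g u"
    if "u \<in> cfg K M" for u
  proof -
    have "pdiff (k, j) (\<lambda>u. ?B u * g u) u = deriv (\<lambda>t. ?B (u((k, j) := t)) * g (u((k, j) := t))) (u (k, j))"
      by (simp only: pdiff_def)
    then show ?thesis using DERIV_imp_deriv[OF has_deriv[OF that]] by simp
  qed
  show "coord_C1 K M (k, j) (\<lambda>u. ?B u * g u)"
    unfolding coord_C1_def
  proof (intro conjI ballI)
    show "moderate K M (\<lambda>u. ?B u * g u)"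
      using g unfolding coord_C1_def by (intro moderate_mult moderate_B_fn) auto
    show "(\<lambda>t. ?B (u((k, j) := t)) * g (u((k, j) := t))) differentiable at (u (k, j))"
      if "u \<in> cfg K M" for u
      using has_deriv[OF that] unfolding real_differentiable_def by blast
    have "moderate K M (\<lambda>u. drift_slope K M \<alpha> u k j * g u + ?B u * pdiff (k, j) g u)"
      using g unfolding coord_C1_def
      by (intro moderate_add moderate_mult moderate_drift_slope moderate_B_fn) auto
    then show "moderate K M (pdiff (k, j) (\<lambda>u. ?B u * g u))"
      by (rule moderate_cong) (simp add: pdiff_eq)
  qed
qed

lemma classC_coord_C1:
  assumes "f \<in> classC K M" and i: "i \<in> idx K M"
  shows "coord_C1 K M i f"
proof -
  obtain k j where kj: "i = (k, j)" by (cases i)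
  have "pd K M k j f = pdiff i f" using i by (simp add: kj pd_eq_pdiff idx_def)
  moreover have "continuous_on (cfg K M) (pd K M k j f) \<and> poly_growth K M (pd K M k j f)"
    using assms unfolding classC_def kj by fast
  moreover have "moderate K M f" and "partially_diff K M f"
    using assms(1) unfolding classC_def moderate_def by blast+
  ultimately show ?thesis
    using i unfolding coord_C1_def moderate_def partially_diff_def by auto
qed

lemma classC_pdiff_coord_C1:
  assumes "f \<in> classC K M" and i: "i \<in> idx K M" and i': "i' \<in> idx K M"
  shows "coord_C1 K M i (pdiff i' f)"
proof -
  obtain k j k' j' where kj: "i = (k, j)" and kj': "i' = (k', j')" by (cases i, cases i')
  have "pd K M k' j' f = pdiff i' f" and "pd K M k j (pdiff i' f) = pdiff i (pdiff i' f)"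
    using i i' by (simp_all add: kj kj' pd_eq_pdiff idx_def)
  moreover have "continuous_on (cfg K M) (pd K M k' j' f) \<and> poly_growth K M (pd K M k' j' f)
      \<and> partially_diff K M (pd K M k' j' f)
      \<and> continuous_on (cfg K M) (pd K M k j (pd K M k' j' f)) \<and> poly_growth K M (pd K M k j (pd K M k' j' f))"
    using assms unfolding classC_def kj kj' by fast
  ultimately show ?thesis
    using i unfolding coord_C1_def moderate_def partially_diff_def by auto
qed

end


section \<open>The adjoint of the generator\<close>

definition gen_term :: "int \<Rightarrow> int \<Rightarrow> (int \<Rightarrow> real) \<Rightarrow> (int \<Rightarrow> int \<Rightarrow> real) \<Rightarrow> (int \<Rightarrow> int \<Rightarrow> real)
    \<Rightarrow> (int \<Rightarrow> int \<Rightarrow> int \<Rightarrow> real) \<Rightarrow> real \<Rightarrow> ((int \<times> int \<Rightarrow> real) \<Rightarrow> real)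
    \<Rightarrow> (int \<times> int \<Rightarrow> real) \<Rightarrow> int \<Rightarrow> int \<Rightarrow> real" where
  "gen_term K M \<alpha> \<beta> \<gamma> lam c F u k j =
      (1/2) * (pd K M k (j+1) (pd K M k (j+1) F) u - pd K M k (j+1) (pd K M k j F) u
               - pd K M k j (pd K M k (j+1) F) u + pd K M k j (pd K M k j F) u)
    - (1/2) * (U K M u k (j+1) - U K M u k j) * (pd K M k (j+1) F u - pd K M k j F u)
    + c * B_fn K M \<alpha> \<beta> \<gamma> lam u k j * pd K M k j F u"

lemma gen_eq_sum_gen_term:
  "gen K M \<alpha> \<beta> \<gamma> lam c F u = (\<Sum>k\<in>{0..<K}. \<Sum>j\<in>{0..<M}. gen_term K M \<alpha> \<beta> \<gamma> lam c F u k j)"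
  unfolding gen_def gen_term_def ..

lemma gen_term_eq_pdiff:
  assumes "(k, j) \<in> idx K M"
  shows "gen_term K M \<alpha> \<beta> \<gamma> lam c F u k j =
      (1/2) * (pdiff (k, (j + 1) mod M) (pdiff (k, (j + 1) mod M) F) u
               - pdiff (k, (j + 1) mod M) (pdiff (k, j) F) u
               - pdiff (k, j) (pdiff (k, (j + 1) mod M) F) u + pdiff (k, j) (pdiff (k, j) F) u)
    - (1/2) * (u (k, (j + 1) mod M) - u (k, j)) * (pdiff (k, (j + 1) mod M) F u - pdiff (k, j) F u)
    + c * B_fn K M \<alpha> \<beta> \<gamma> lam u k j * pdiff (k, j) F u"
  using assms unfolding gen_term_def by (simp add: pd_eq_pdiff U_def idx_def)

context
  fixes K M :: int
  assumes K: "K \<ge> 1" and M: "M \<ge> 1"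
begin

lemma succ_site_in_idx: "(k, j) \<in> idx K M \<Longrightarrow> (k, (j + 1) mod M) \<in> idx K M"
  using M by (simp add: idx_def)

lemma moderate_gen:
  assumes F: "F \<in> classC K M"
  shows "moderate K M (gen K M \<alpha> \<beta> \<gamma> lam c F)"
proof -
  have first: "moderate K M (pdiff i F)" if "i \<in> idx K M" for i
    using classC_coord_C1[OF K M F that] unfolding coord_C1_def by simp
  have second: "moderate K M (pdiff i (pdiff i' F))" if "i \<in> idx K M" "i' \<in> idx K M" for i i'
    using classC_pdiff_coord_C1[OF K M F that] unfolding coord_C1_def by simp
  have "moderate K M (\<lambda>u. gen_term K M \<alpha> \<beta> \<gamma> lam c F u k j)" if kj: "(k, j) \<in> idx K M" for k j
    unfolding gen_term_eq_pdiff[OF kj]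
    by (intro moderate_add moderate_diff moderate_mult moderate_const moderate_coordinate
        moderate_B_fn[OF K M] first second succ_site_in_idx kj)
  then show ?thesis
    unfolding gen_eq_sum_gen_term by (intro moderate_sum) (auto simp: idx_def)
qed

text \<open>Site by site, \<open>(L f) g - f (L\<^sup>* g)\<close> is a combination of integration-by-parts defects, up to
  the error \<open>\<epsilon> f g (u\<^sub>k\<^sub>,\<^sub>j B\<^sub>k\<^sub>,\<^sub>j - \<partial>\<^sub>k\<^sub>,\<^sub>j B\<^sub>k\<^sub>,\<^sub>j)\<close>.\<close>

lemma mean_zero_site_defect:
  assumes f: "f \<in> classC K M" and g: "g \<in> classC K M" and kj: "(k, j) \<in> idx K M"
  shows "mean_zero K M (\<lambda>u. gen_term K M \<alpha> \<beta> \<gamma> lam \<epsilon> f u k j * g u - f u * gen_term K M \<alpha> \<beta> \<gamma> lam (-\<epsilon>) g u k j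
      - \<epsilon> * (f u * g u) * (u (k, j) * B_fn K M \<alpha> \<beta> \<gamma> lam u k j - drift_slope K M \<alpha> u k j))"
proof -
  define a where "a = (k, (j + 1) mod M)"
  define b where "b = (k, j)"
  have a: "a \<in> idx K M" unfolding a_def by (rule succ_site_in_idx[OF kj])
  have b: "b \<in> idx K M" unfolding b_def by (rule kj)
  note C1 = classC_coord_C1[OF K M] classC_pdiff_coord_C1[OF K M]
  let ?B = "\<lambda>u. B_fn K M \<alpha> \<beta> \<gamma> lam u k j"
  have drift: "mean_zero K M (ibp_defect b f (\<lambda>u. ?B u * g u))"
    unfolding b_def by (intro mean_zero_ibp_defect coord_C1_B_fn_mult(1)[OF K M] C1 kj f g)
  have "mean_zero K M (\<lambda>u.
        (1/2) * ibp_defect a (pdiff a f) g u - (1/2) * ibp_defect a (pdiff b f) g u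
      - (1/2) * ibp_defect b (pdiff a f) g u + (1/2) * ibp_defect b (pdiff b f) g u
      - (1/2) * ibp_defect a (pdiff a g) f u + (1/2) * ibp_defect a (pdiff b g) f u
      + (1/2) * ibp_defect b (pdiff a g) f u - (1/2) * ibp_defect b (pdiff b g) f u
      + \<epsilon> * ibp_defect b f (\<lambda>u. ?B u * g u) u)"
    by (intro mean_zero_add mean_zero_diff mean_zero_cmult drift mean_zero_ibp_defect C1 a b f g)
  then show ?thesis
  proof (rule mean_zero_cong)
    fix u assume u: "u \<in> cfg K M"
    have pdiff_drift: "pdiff b (\<lambda>u. ?B u * g u) u = drift_slope K M \<alpha> u k j * g u + ?B u * pdiff b g u"
      unfolding b_def by (rule coord_C1_B_fn_mult(2)[OF K M kj classC_coord_C1[OF K M g kj] u])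
    show "(1/2) * ibp_defect a (pdiff a f) g u - (1/2) * ibp_defect a (pdiff b f) g u
      - (1/2) * ibp_defect b (pdiff a f) g u + (1/2) * ibp_defect b (pdiff b f) g u
      - (1/2) * ibp_defect a (pdiff a g) f u + (1/2) * ibp_defect a (pdiff b g) f u
      + (1/2) * ibp_defect b (pdiff a g) f u - (1/2) * ibp_defect b (pdiff b g) f u
      + \<epsilon> * ibp_defect b f (\<lambda>u. ?B u * g u) u
      = gen_term K M \<alpha> \<beta> \<gamma> lam \<epsilon> f u k j * g u - f u * gen_term K M \<alpha> \<beta> \<gamma> lam (-\<epsilon>) g u k j
        - \<epsilon> * (f u * g u) * (u (k, j) * ?B u - drift_slope K M \<alpha> u k j)"
      unfolding gen_term_eq_pdiff[OF kj] a_def[symmetric] b_def[symmetric] ibp_defect_def pdiff_drift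
      by (simp add: algebra_simps add_divide_distrib diff_divide_distrib)
  qed
qed

lemma mean_zero_gen_adjoint_defect:
  assumes "cond_C1 K \<beta> \<gamma>" and "cond_C2 K lam" and "f \<in> classC K M" and "g \<in> classC K M"
  shows "mean_zero K M (\<lambda>u. gen K M \<alpha> \<beta> \<gamma> lam \<epsilon> f u * g u - f u * gen K M \<alpha> \<beta> \<gamma> lam (-\<epsilon>) g u)"
proof -
  let ?D = "\<lambda>u k j. u (k, j) * B_fn K M \<alpha> \<beta> \<gamma> lam u k j - drift_slope K M \<alpha> u k j"
  have "mean_zero K M (\<lambda>u. \<Sum>k\<in>{0..<K}. \<Sum>j\<in>{0..<M}.
      gen_term K M \<alpha> \<beta> \<gamma> lam \<epsilon> f u k j * g u - f u * gen_term K M \<alpha> \<beta> \<gamma> lam (-\<epsilon>) g u k j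
      - \<epsilon> * (f u * g u) * ?D u k j)"
    using assms(3,4) by (intro mean_zero_sum mean_zero_site_defect) (auto simp: idx_def)
  then show ?thesis
  proof (rule mean_zero_cong)
    fix u
    let ?T = "\<lambda>k j. gen_term K M \<alpha> \<beta> \<gamma> lam \<epsilon> f u k j * g u - f u * gen_term K M \<alpha> \<beta> \<gamma> lam (-\<epsilon>) g u k j"
    have D: "(\<Sum>k\<in>{0..<K}. \<Sum>j\<in>{0..<M}. ?D u k j) = 0"
      using drift_divergence_free[OF K M assms(1,2), of u \<alpha>] by (simp add: U_def)
    have "(\<Sum>k\<in>{0..<K}. \<Sum>j\<in>{0..<M}. ?T k j - \<epsilon> * (f u * g u) * ?D u k j)
        = (\<Sum>k\<in>{0..<K}. \<Sum>j\<in>{0..<M}. ?T k j) - \<epsilon> * (f u * g u) * (\<Sum>k\<in>{0..<K}. \<Sum>j\<in>{0..<M}. ?D u k j)"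
      by (simp add: sum_subtractf sum_distrib_left right_diff_distrib)
    also have "(\<Sum>k\<in>{0..<K}. \<Sum>j\<in>{0..<M}. ?T k j)
        = gen K M \<alpha> \<beta> \<gamma> lam \<epsilon> f u * g u - f u * gen K M \<alpha> \<beta> \<gamma> lam (-\<epsilon>) g u"
      unfolding gen_eq_sum_gen_term by (simp add: sum_subtractf sum_distrib_left sum_distrib_right)
    finally show "(\<Sum>k\<in>{0..<K}. \<Sum>j\<in>{0..<M}. ?T k j - \<epsilon> * (f u * g u) * ?D u k j)
        = gen K M \<alpha> \<beta> \<gamma> lam \<epsilon> f u * g u - f u * gen K M \<alpha> \<beta> \<gamma> lam (-\<epsilon>) g u"
      using D by simp
  qed
qed

end

theorem lemma3p2:
  fixes K M :: int and \<epsilon> :: real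
    and \<alpha> :: "int \<Rightarrow> real" and \<beta> \<gamma> :: "int \<Rightarrow> int \<Rightarrow> real" and lam :: "int \<Rightarrow> int \<Rightarrow> int \<Rightarrow> real"
    and f g :: "(int \<times> int \<Rightarrow> real) \<Rightarrow> real"
  assumes "K \<ge> 1" and "M \<ge> 1"
    and "cond_C1 K \<beta> \<gamma>" and "cond_C2 K lam"
    and "\<epsilon> > 0"
    and "f \<in> classC K M" and "g \<in> classC K M"
  shows "(\<integral>u. gen K M \<alpha> \<beta> \<gamma> lam \<epsilon> f u * g u \<partial>mu K M)
       = (\<integral>u. f u * gen K M \<alpha> \<beta> \<gamma> lam (-\<epsilon>) g u \<partial>mu K M)"
proof -
  have "moderate K M f" and "moderate K M g"
    using assms(6,7) unfolding classC_def moderate_def by blast+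
  moreover have "moderate K M (gen K M \<alpha> \<beta> \<gamma> lam \<epsilon> f)" and "moderate K M (gen K M \<alpha> \<beta> \<gamma> lam (-\<epsilon>) g)"
    using moderate_gen[OF assms(1,2)] assms(6,7) by blast+
  ultimately have "integrable (mu K M) (\<lambda>u. gen K M \<alpha> \<beta> \<gamma> lam \<epsilon> f u * g u)"
    and "integrable (mu K M) (\<lambda>u. f u * gen K M \<alpha> \<beta> \<gamma> lam (-\<epsilon>) g u)"
    by (blast intro: integrable_moderate moderate_mult)+
  moreover have "mean_zero K M (\<lambda>u. gen K M \<alpha> \<beta> \<gamma> lam \<epsilon> f u * g u - f u * gen K M \<alpha> \<beta> \<gamma> lam (-\<epsilon>) g u)"
    using mean_zero_gen_adjoint_defect assms(1-4,6,7) .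
  ultimately show ?thesis
    unfolding mean_zero_def has_bochner_integral_iff by simp
qed

end
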